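(* Let $A$ be a $B$-algebra with a $B$-linear double bracket, $B=\bigoplus_{s\in I}\Bbbk e_s$, and let $e_1,e_2$ be two distinct idempotents of the family. Let $A_1=A^f_{e_2\to e_1}$ and $A_2=A^f_{e_1\to e_2}$ with their induced double brackets, and let $\pi_k:A\to A_k$ ($k=1,2$) be the maps $a\mapsto a^f$. Then there exists an isomorphism of algebras $\phi:A_1\to A_2$ with $\phi\circ\pi_1=\pi_2$ which is an isomorphism of double brackets, i.e. $\{\!\{\phi(a),\phi(b)\}\!\}_{A_2}=(\phi\otimes\phi)\{\!\{a,b\}\!\}_{A_1}$ for all $a,b\in A_1$.
   Context: $\Bbbk$ field of characteristic $0$; algebras associative, unital, finitely generated; $B=\bigoplus_{s\in I}\Bbbk e_s$ with orthogonal idempotents summing to $1$. Sweedler notation $d=d'\otimes d''$, $(d'\otimes d'')^\circ=d''\otimes d'$, outer bimodule $a(d'\otimes d'')b=ad'\otimes d''b$. A $B$-linear double bracket: bilinear $\{\!\{-,-\}\!\}:A\times A\to A\otimes A$ with $\{\!\{a,b\}\!\}=-\{\!\{b,a\}\!\}^\circ$, $\{\!\{a,bc\}\!\}=\{\!\{a,b\}\!\}c+b\{\!\{a,c\}\!\}$, zero if an argument lies in $B$. Fusion of $e_j$ onto $e_i$ ($i\ne j$): $\hat e=1-e_i-e_j$, $\bar A=A*_{\Bbbk e_i\oplus\Bbbk e_j\oplus\Bbbk\hat e}(\mathrm{Mat}_2(\Bbbk)\oplus\Bbbk\hat e)$ where $\mathrm{Mat}_2(\Bbbk)$ has matrix units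 $e_{ii}=e_i,e_{ij},e_{ji},e_{jj}=e_j$; $A^f_{e_j\to e_i}=\epsilon\bar A\epsilon$ with $\epsilon=1-e_j$, an algebra over $\bigoplus_{s\ne j}\Bbbk e_s$; $a^f=\epsilon a\epsilon+e_{ij}ae_{ji}+e_{ij}a\epsilon+\epsilon ae_{ji}$. $A^f$ is generated by elements $e_aaf_a$ with $a\in A$, $e_a\in\{\epsilon,e_{ij}\}$, $f_a\in\{\epsilon,e_{ji}\}$ of the forms $t$ ($t\in\epsilon A\epsilon$), $e_{ij}u$ ($u\in e_jA\epsilon$), $ve_{ji}$ ($v\in\epsilon Ae_j$), $e_{ij}we_{ji}$ ($w\in e_jAe_j$); the induced double bracket on $A^f$ is determined by $\{\!\{e_aaf_a,e_bbf_b\}\!\}=e_b\{\!\{a,b\}\!\}'f_a\otimes e_a\{\!\{a,b\}\!\}''f_b$. *)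

theory Defs
  imports Main "HOL-Library.Poly_Mapping"
begin

record ('k, 'a) kalg =
  car  :: "'a set"
  add  :: "'a \<Rightarrow> 'a \<Rightarrow> 'a"
  neg  :: "'a \<Rightarrow> 'a"
  zer  :: 'a
  mul  :: "'a \<Rightarrow> 'a \<Rightarrow> 'a"
  one  :: 'a
  smul :: "'k \<Rightarrow> 'a \<Rightarrow> 'a"

definition sub :: "('k, 'a) kalg \<Rightarrow> 'a \<Rightarrow> 'a \<Rightarrow> 'a" where
  "sub K x y = add K x (neg K y)"

definition is_kalg :: "('k::field, 'a) kalg \<Rightarrow> bool" where
  "is_kalg K \<longleftrightarrow>
    zer K \<in> car K \<and> one K \<in> car K \<and>
    (\<forall>x\<in>car K. \<forall>y\<in>car K. add K x y \<in> car K \<and> mul K x y \<in> car K) \<and>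
    (\<forall>x\<in>car K. neg K x \<in> car K) \<and>
    (\<forall>c. \<forall>x\<in>car K. smul K c x \<in> car K) \<and>
    (\<forall>x\<in>car K. \<forall>y\<in>car K. \<forall>z\<in>car K.
        add K (add K x y) z = add K x (add K y z) \<and>
        mul K (mul K x y) z = mul K x (mul K y z) \<and>
        mul K x (add K y z) = add K (mul K x y) (mul K x z) \<and>
        mul K (add K x y) z = add K (mul K x z) (mul K y z)) \<and>
    (\<forall>x\<in>car K. \<forall>y\<in>car K. add K x y = add K y x) \<and>
    (\<forall>x\<in>car K. add K x (zer K) = x \<and> add K x (neg K x) = zer K \<and>
                 mul K (one K) x = x \<and> mul K x (one K) = x) \<and>
    (\<forall>c d. \<forall>x\<in>car K. \<forall>y\<in>car K.
        smul K c (add K x y) = add K (smul K c x) (smul K c y) \<and>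
        smul K (c + d) x = add K (smul K c x) (smul K d x) \<and>
        smul K (c * d) x = smul K c (smul K d x) \<and>
        smul K 1 x = x \<and>
        mul K (smul K c x) y = smul K c (mul K x y) \<and>
        mul K x (smul K c y) = smul K c (mul K x y))"

inductive_set gen_subalg :: "('k, 'a) kalg \<Rightarrow> 'a set \<Rightarrow> 'a set" for K G where
  gen: "x \<in> G \<Longrightarrow> x \<in> gen_subalg K G"
| one: "one K \<in> gen_subalg K G"
| add: "x \<in> gen_subalg K G \<Longrightarrow> y \<in> gen_subalg K G \<Longrightarrow> add K x y \<in> gen_subalg K G"
| mul: "x \<in> gen_subalg K G \<Longrightarrow> y \<in> gen_subalg K G \<Longrightarrow> mul K x y \<in> gen_subalg K G"
| smul: "x \<in> gen_subalg K G \<Longrightarrow> smul K c x \<in> gen_subalg K G"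

definition fin_gen :: "('k, 'a) kalg \<Rightarrow> bool" where
  "fin_gen K \<longleftrightarrow> (\<exists>G. finite G \<and> G \<subseteq> car K \<and> gen_subalg K G = car K)"

definition lincomb :: "('k, 'a) kalg \<Rightarrow> ('i \<Rightarrow> 'a) \<Rightarrow> ('i \<Rightarrow> 'k) \<Rightarrow> 'i list \<Rightarrow> 'a" where
  "lincomb K e c I = foldr (\<lambda>s acc. add K (smul K (c s) (e s)) acc) I (zer K)"

definition kspan :: "('k, 'a) kalg \<Rightarrow> ('i \<Rightarrow> 'a) \<Rightarrow> 'i list \<Rightarrow> 'a set" where
  "kspan K e I = {lincomb K e c I | c. True}"

text \<open>K is a B-algebra for B = direct sum of k e_s (s in I), with e_s orthogonal
  idempotents summing to 1 (the index set is the finite set of the distinct list I).\<close>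
definition B_algebra :: "('k::field, 'a) kalg \<Rightarrow> ('i \<Rightarrow> 'a) \<Rightarrow> 'i list \<Rightarrow> bool" where
  "B_algebra K e I \<longleftrightarrow> is_kalg K \<and> distinct I \<and> (\<forall>s\<in>set I. e s \<in> car K) \<and>
     (\<forall>s\<in>set I. \<forall>t\<in>set I. mul K (e s) (e t) = (if s = t then e s else zer K)) \<and>
     lincomb K e (\<lambda>_. 1) I = one K \<and>
     (\<forall>c. lincomb K e c I = zer K \<longrightarrow> (\<forall>s\<in>set I. c s = 0))"

text \<open>A tensor is represented by a finite list of pairs [(x1,y1),...] meaning
  the sum of the xi \<otimes> yi; tens_eq is the congruence whose quotient is K \<otimes>_k K.\<close>
inductive tens_eq :: "('k, 'a) kalg \<Rightarrow> ('a \<times> 'a) list \<Rightarrow> ('a \<times> 'a) list \<Rightarrow> bool" for K where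
  refl: "tens_eq K t t"
| sym: "tens_eq K t u \<Longrightarrow> tens_eq K u t"
| trans: "tens_eq K t u \<Longrightarrow> tens_eq K u v \<Longrightarrow> tens_eq K t v"
| app: "tens_eq K t t' \<Longrightarrow> tens_eq K u u' \<Longrightarrow> tens_eq K (t @ u) (t' @ u')"
| swap: "tens_eq K (t @ u) (u @ t)"
| addl: "x \<in> car K \<Longrightarrow> x' \<in> car K \<Longrightarrow> y \<in> car K \<Longrightarrow>
          tens_eq K [(add K x x', y)] [(x, y), (x', y)]"
| addr: "x \<in> car K \<Longrightarrow> y \<in> car K \<Longrightarrow> y' \<in> car K \<Longrightarrow>
          tens_eq K [(x, add K y y')] [(x, y), (x, y')]"
| scal: "x \<in> car K \<Longrightarrow> y \<in> car K \<Longrightarrow> tens_eq K [(smul K c x, y)] [(x, smul K c y)]"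
| zero: "y \<in> car K \<Longrightarrow> tens_eq K [] [(zer K, y)]"

definition tlmul :: "('k, 'a) kalg \<Rightarrow> 'a \<Rightarrow> ('a \<times> 'a) list \<Rightarrow> ('a \<times> 'a) list" where
  "tlmul K a t = map (\<lambda>(p, q). (mul K a p, q)) t"

definition trmul :: "('k, 'a) kalg \<Rightarrow> ('a \<times> 'a) list \<Rightarrow> 'a \<Rightarrow> ('a \<times> 'a) list" where
  "trmul K t b = map (\<lambda>(p, q). (p, mul K q b)) t"

definition tswap :: "('a \<times> 'a) list \<Rightarrow> ('a \<times> 'a) list" where
  "tswap t = map (\<lambda>(p, q). (q, p)) t"

definition tneg :: "('k, 'a) kalg \<Rightarrow> ('a \<times> 'a) list \<Rightarrow> ('a \<times> 'a) list" where
  "tneg K t = map (\<lambda>(p, q). (neg K p, q)) t"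

definition tscal :: "('k, 'a) kalg \<Rightarrow> 'k \<Rightarrow> ('a \<times> 'a) list \<Rightarrow> ('a \<times> 'a) list" where
  "tscal K c t = map (\<lambda>(p, q). (smul K c p, q)) t"

definition tmap :: "('a \<Rightarrow> 'b) \<Rightarrow> ('a \<times> 'a) list \<Rightarrow> ('b \<times> 'b) list" where
  "tmap f t = map (\<lambda>(p, q). (f p, f q)) t"

definition dbl_bracket ::
  "('k::field, 'a) kalg \<Rightarrow> ('i \<Rightarrow> 'a) \<Rightarrow> 'i list \<Rightarrow> ('a \<Rightarrow> 'a \<Rightarrow> ('a \<times> 'a) list) \<Rightarrow> bool" where
  "dbl_bracket K e I br \<longleftrightarrow>
    (\<forall>x\<in>car K. \<forall>y\<in>car K. set (br x y) \<subseteq> car K \<times> car K) \<and>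
    (\<forall>x\<in>car K. \<forall>y\<in>car K. \<forall>z\<in>car K.
        tens_eq K (br (add K x y) z) (br x z @ br y z) \<and>
        tens_eq K (br x (add K y z)) (br x y @ br x z)) \<and>
    (\<forall>c. \<forall>x\<in>car K. \<forall>y\<in>car K.
        tens_eq K (br (smul K c x) y) (tscal K c (br x y)) \<and>
        tens_eq K (br x (smul K c y)) (tscal K c (br x y))) \<and>
    (\<forall>x\<in>car K. \<forall>y\<in>car K. tens_eq K (br x y) (tneg K (tswap (br y x)))) \<and>
    (\<forall>x\<in>car K. \<forall>y\<in>car K. \<forall>z\<in>car K.
        tens_eq K (br x (mul K y z)) (trmul K (br x y) z @ tlmul K y (br x z))) \<and>
    (\<forall>b\<in>kspan K e I. \<forall>x\<in>car K. tens_eq K (br b x) [] \<and> tens_eq K (br x b) [])"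

text \<open>Free k-algebra on generators 'g: k-linear combinations of words.\<close>
type_synonym ('g, 'k) free = "'g list \<Rightarrow>\<^sub>0 'k"

definition fmul :: "('g, 'k::field) free \<Rightarrow> ('g, 'k) free \<Rightarrow> ('g, 'k) free" where
  "fmul p q = (\<Sum>u\<in>Poly_Mapping.keys p. \<Sum>v\<in>Poly_Mapping.keys q. Poly_Mapping.single (u @ v) (Poly_Mapping.lookup p u * Poly_Mapping.lookup q v))"

definition fone :: "('g, 'k::field) free" where
  "fone = Poly_Mapping.single [] 1"

definition fscal :: "'k::field \<Rightarrow> ('g, 'k) free \<Rightarrow> ('g, 'k) free" where
  "fscal c p = fmul (Poly_Mapping.single [] c) p"

definition fgen :: "'g \<Rightarrow> ('g, 'k::field) free" where
  "fgen g = Poly_Mapping.single [g] 1"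

text \<open>Generators of the amalgamated free product: elements of A (Inl) and
  matrix units e_pq (Inr (p,q)), p,q \<in> {i,j}.\<close>
type_synonym ('a, 'i, 'k) fbar = "('a + 'i \<times> 'i, 'k) free"

definition fus_rels :: "('k::field, 'a) kalg \<Rightarrow> ('i \<Rightarrow> 'a) \<Rightarrow> 'i \<Rightarrow> 'i \<Rightarrow> ('a, 'i, 'k) fbar set" where
  "fus_rels A e i j =
     {fgen (Inl (one A)) - fone} \<union>
     {fgen (Inl (add A a b)) - (fgen (Inl a) + fgen (Inl b)) | a b. a \<in> car A \<and> b \<in> car A} \<union>
     {fgen (Inl (smul A c a)) - fscal c (fgen (Inl a)) | c a. a \<in> car A} \<union>
     {fgen (Inl (mul A a b)) - fmul (fgen (Inl a)) (fgen (Inl b)) | a b. a \<in> car A \<and> b \<in> car A} \<union>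
     {fgen (Inl a) | a. a \<notin> car A} \<union>
     {fmul (fgen (Inr (p, q))) (fgen (Inr (r, s))) - (if q = r then fgen (Inr (p, s)) else 0)
        | p q r s. p \<in> {i, j} \<and> q \<in> {i, j} \<and> r \<in> {i, j} \<and> s \<in> {i, j}} \<union>
     {fgen (Inr (p, p)) - fgen (Inl (e p)) | p. p \<in> {i, j}} \<union>
     {fgen (Inr (p, q)) | p q. p \<notin> {i, j} \<or> q \<notin> {i, j}}"

inductive_set fideal :: "('g, 'k::field) free set \<Rightarrow> ('g, 'k) free set" for R where
  rel: "r \<in> R \<Longrightarrow> r \<in> fideal R"
| zero: "0 \<in> fideal R"
| add: "x \<in> fideal R \<Longrightarrow> y \<in> fideal R \<Longrightarrow> x + y \<in> fideal R"
| lmul: "x \<in> fideal R \<Longrightarrow> fmul p x \<in> fideal R"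
| rmul: "x \<in> fideal R \<Longrightarrow> fmul x p \<in> fideal R"

definition fclass :: "('g, 'k::field) free set \<Rightarrow> ('g, 'k) free \<Rightarrow> ('g, 'k) free set" where
  "fclass J p = {q. p - q \<in> J}"

definition frep :: "('g, 'k::field) free set \<Rightarrow> ('g, 'k) free" where
  "frep X = (SOME p. p \<in> X)"

text \<open>Abar = A *_{k e_i + k e_j + k e^} (Mat_2(k) + k e^), as the quotient of the free
  algebra by the two-sided ideal generated by fus_rels.\<close>
definition Abar :: "('k::field, 'a) kalg \<Rightarrow> ('i \<Rightarrow> 'a) \<Rightarrow> 'i \<Rightarrow> 'i \<Rightarrow>
                    ('k, ('a, 'i, 'k) fbar set) kalg" where
  "Abar A e i j = (let J = fideal (fus_rels A e i j) in
     \<lparr> car = {fclass J p | p. True},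
       add = (\<lambda>X Y. fclass J (frep X + frep Y)),
       neg = (\<lambda>X. fclass J (- frep X)),
       zer = fclass J 0,
       mul = (\<lambda>X Y. fclass J (fmul (frep X) (frep Y))),
       one = fclass J fone,
       smul = (\<lambda>c X. fclass J (fscal c (frep X))) \<rparr>)"

definition iota :: "('k::field, 'a) kalg \<Rightarrow> ('i \<Rightarrow> 'a) \<Rightarrow> 'i \<Rightarrow> 'i \<Rightarrow> 'a \<Rightarrow> ('a, 'i, 'k) fbar set" where
  "iota A e i j a = fclass (fideal (fus_rels A e i j)) (fgen (Inl a))"

definition munit :: "('k::field, 'a) kalg \<Rightarrow> ('i \<Rightarrow> 'a) \<Rightarrow> 'i \<Rightarrow> 'i \<Rightarrow> 'i \<Rightarrow> 'i \<Rightarrow> ('a, 'i, 'k) fbar set" where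
  "munit A e i j p q = fclass (fideal (fus_rels A e i j)) (fgen (Inr (p, q)))"

definition feps :: "('k::field, 'a) kalg \<Rightarrow> ('i \<Rightarrow> 'a) \<Rightarrow> 'i \<Rightarrow> 'i \<Rightarrow> ('a, 'i, 'k) fbar set" where
  "feps A e i j = sub (Abar A e i j) (one (Abar A e i j)) (iota A e i j (e j))"

text \<open>Fusion of e_j onto e_i: A^f = epsilon Abar epsilon, with unit epsilon.\<close>
definition fusion :: "('k::field, 'a) kalg \<Rightarrow> ('i \<Rightarrow> 'a) \<Rightarrow> 'i \<Rightarrow> 'i \<Rightarrow>
                      ('k, ('a, 'i, 'k) fbar set) kalg" where
  "fusion A e i j = (let Ab = Abar A e i j; ep = feps A e i j in
      Ab\<lparr> car := {mul Ab ep (mul Ab x ep) | x. x \<in> car Ab}, one := ep \<rparr>)"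

definition fus_idem :: "('k::field, 'a) kalg \<Rightarrow> ('i \<Rightarrow> 'a) \<Rightarrow> 'i \<Rightarrow> 'i \<Rightarrow> 'i \<Rightarrow> ('a, 'i, 'k) fbar set" where
  "fus_idem A e i j s = iota A e i j (e s)"

definition fus_index :: "'i list \<Rightarrow> 'i \<Rightarrow> 'i list" where
  "fus_index I j = filter (\<lambda>s. s \<noteq> j) I"

definition fpi :: "('k::field, 'a) kalg \<Rightarrow> ('i \<Rightarrow> 'a) \<Rightarrow> 'i \<Rightarrow> 'i \<Rightarrow> 'a \<Rightarrow> ('a, 'i, 'k) fbar set" where
  "fpi A e i j a = (let Ab = Abar A e i j; ep = feps A e i j; x = iota A e i j a;
                       eij = munit A e i j i j; eji = munit A e i j j i; M = mul Ab in
     add Ab (add Ab (M ep (M x ep)) (M eij (M x eji))) (add Ab (M eij (M x ep)) (M ep (M x eji))))"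

text \<open>The induced double bracket on A^f is the B-linear double bracket determined by
  {{e_a a f_a, e_b b f_b}} = e_b {{a,b}}' f_a \<otimes> e_a {{a,b}}'' f_b on the generators,
  where e_a = e_ij if la (then a \<in> e_j A) and e_a = eps otherwise (then a \<in> eps A),
  f_a = e_ji if ra (then a \<in> A e_j) and f_a = eps otherwise (then a \<in> A eps).\<close>
definition induced_bracket ::
  "('k::field, 'a) kalg \<Rightarrow> ('i \<Rightarrow> 'a) \<Rightarrow> 'i list \<Rightarrow> 'i \<Rightarrow> 'i \<Rightarrow> ('a \<Rightarrow> 'a \<Rightarrow> ('a \<times> 'a) list) \<Rightarrow>
   (('a, 'i, 'k) fbar set \<Rightarrow> ('a, 'i, 'k) fbar set \<Rightarrow> (('a, 'i, 'k) fbar set \<times> ('a, 'i, 'k) fbar set) list)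
   \<Rightarrow> bool" where
  "induced_bracket A e I i j brA br \<longleftrightarrow>
    (let F = fusion A e i j; Ab = Abar A e i j; M = mul Ab; ep = feps A e i j;
         eij = munit A e i j i j; eji = munit A e i j j i; io = iota A e i j;
         L = (\<lambda>l. if l then eij else ep); R = (\<lambda>r. if r then eji else ep);
         cA = (\<lambda>l. if l then e j else sub A (one A) (e j)) in
     dbl_bracket F (fus_idem A e i j) (fus_index I j) br \<and>
     (\<forall>a\<in>car A. \<forall>b\<in>car A. \<forall>la ra lb rb.
        mul A (cA la) a = a \<and> mul A a (cA ra) = a \<and>
        mul A (cA lb) b = b \<and> mul A b (cA rb) = b \<longrightarrow>
        tens_eq F (br (M (L la) (M (io a) (R ra))) (M (L lb) (M (io b) (R rb))))
          (map (\<lambda>(p, q). (M (L lb) (M (io p) (R ra)), M (L la) (M (io q) (R rb)))) (brA a b))))"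

definition alg_iso :: "('k, 'a) kalg \<Rightarrow> ('k, 'b) kalg \<Rightarrow> ('a \<Rightarrow> 'b) \<Rightarrow> bool" where
  "alg_iso K L f \<longleftrightarrow> bij_betw f (car K) (car L) \<and> f (one K) = one L \<and>
     (\<forall>x\<in>car K. \<forall>y\<in>car K. f (add K x y) = add L (f x) (f y) \<and> f (mul K x y) = mul L (f x) (f y)) \<and>
     (\<forall>c. \<forall>x\<in>car K. f (smul K c x) = smul L c (f x))"

end

theory Submission
  imports Defs
begin

text \<open>Both fusions are corners of one algebra \<open>Abar = A *\<^sub>B (Mat\<^sub>2(k) \<oplus> k \<^bold>e)\<close>, cut out by
  \<open>1 - e\<^sub>j\<close> and by \<open>1 - e\<^sub>i\<close> respectively. Conjugation by the permutation matrix
  \<open>U = e\<^sub>i\<^sub>j + e\<^sub>j\<^sub>i + \<^bold>e\<close> (where \<open>\<^bold>e = 1 - e\<^sub>i - e\<^sub>j\<close>) is an involutive automorphism of \<open>Abar\<close>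
  exchanging these two idempotents, so it restricts to an isomorphism of the corners, and it
  sends \<open>a\<^sup>f\<close> to \<open>a\<^sup>f\<close>. Splitting \<open>A\<close> into the blocks cut out by \<open>e\<^sub>i\<close>, \<open>e\<^sub>j\<close>, \<open>\<^bold>e\<close>, it maps each
  generator \<open>e\<^sub>a a f\<^sub>a\<close> of the first fusion to the corresponding generator of the second; both
  induced brackets are given on generators by the same formula in \<open>{{a,b}}\<close>, so the
  isomorphism intertwines them there. A homomorphism intertwining two double brackets on
  generators does so everywhere, as both sides are additive, Leibniz and antisymmetric and
  vanish at the unit.\<close>

section \<open>The free algebra and its quotients\<close>

text \<open>Words over the generators form the monoid \<open>(@, [])\<close>; with this instance the free
  algebra \<open>('g, 'k) free\<close> is the monoid ring, and \<open>fmul\<close> is its multiplication.\<close>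

instantiation list :: (type) monoid_add
begin
definition plus_list :: "'a list \<Rightarrow> 'a list \<Rightarrow> 'a list" where "plus_list = (@)"
definition zero_list :: "'a list" where "zero_list = []"
instance by standard (simp_all add: plus_list_def zero_list_def)
end

lemma Nil_eq_zero: "[] = (0 :: 'a list)"
  by (simp add: zero_list_def)

lemma poly_mapping_monomial_sum:
  "(p :: 'a \<Rightarrow>\<^sub>0 'b::comm_monoid_add) = (\<Sum>u\<in>Poly_Mapping.keys p. Poly_Mapping.single u (Poly_Mapping.lookup p u))"
  by (rule poly_mapping_eqI) (auto simp: lookup_sum lookup_single when_def in_keys_iff)

lemma fmul_eq_times: "fmul p q = p * q"
proof -
  have "p * q = (\<Sum>u\<in>Poly_Mapping.keys p. Poly_Mapping.single u (Poly_Mapping.lookup p u)) *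
                (\<Sum>v\<in>Poly_Mapping.keys q. Poly_Mapping.single v (Poly_Mapping.lookup q v))"
    using poly_mapping_monomial_sum[of p] poly_mapping_monomial_sum[of q] by simp
  also have "\<dots> = fmul p q"
    unfolding fmul_def sum_distrib_left sum_distrib_right
    by (subst sum.swap) (simp add: mult_single plus_list_def sum_distrib_left)
  finally show ?thesis by simp
qed

lemma fone_eq_one: "fone = 1"
  by (simp add: fone_def Nil_eq_zero)

lemma fscal_eq_times: "fscal c p = Poly_Mapping.single [] c * p"
  by (simp add: fscal_def fmul_eq_times)

lemma single_Nil_times_commute:
  "Poly_Mapping.single [] c * p = p * Poly_Mapping.single [] (c :: 'k::comm_semiring_1)"
proof -
  have "Poly_Mapping.single [] c * p =
      (\<Sum>u\<in>Poly_Mapping.keys p. Poly_Mapping.single [] c * Poly_Mapping.single u (Poly_Mapping.lookup p u))"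
    by (subst poly_mapping_monomial_sum[of p]) (simp add: sum_distrib_left)
  also have "\<dots> = (\<Sum>u\<in>Poly_Mapping.keys p. Poly_Mapping.single u (Poly_Mapping.lookup p u) * Poly_Mapping.single [] c)"
    by (simp add: mult_single Nil_eq_zero mult.commute)
  also have "\<dots> = p * Poly_Mapping.single [] c"
    by (subst (2) poly_mapping_monomial_sum[of p]) (simp add: sum_distrib_right)
  finally show ?thesis .
qed

lemma single_Nil_times_left_commute:
  "q * (Poly_Mapping.single [] c * p) = Poly_Mapping.single [] (c :: 'k::comm_semiring_1) * (q * p)"
  by (simp add: single_Nil_times_commute mult.assoc flip: mult.assoc[of _ _ p])

lemma fideal_times:
  "x \<in> fideal R \<Longrightarrow> p * x \<in> fideal R" "x \<in> fideal R \<Longrightarrow> x * p \<in> fideal R"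
  using fideal.lmul fideal.rmul by (auto simp: fmul_eq_times)

lemma fideal_uminus: "x \<in> fideal R \<Longrightarrow> - x \<in> fideal R"
  using fideal_times(1)[of x R "-1"] by simp

lemma fideal_diff: "x \<in> fideal R \<Longrightarrow> y \<in> fideal R \<Longrightarrow> x - y \<in> fideal R"
  using fideal.add[OF _ fideal_uminus] by (metis diff_conv_add_uminus)

lemma fclass_eq_iff: "fclass (fideal R) p = fclass (fideal R) q \<longleftrightarrow> p - q \<in> fideal R"
proof
  assume "fclass (fideal R) p = fclass (fideal R) q"
  moreover have "q \<in> fclass (fideal R) q" by (simp add: fclass_def fideal.zero)
  ultimately have "q \<in> fclass (fideal R) p" by simp
  thus "p - q \<in> fideal R" by (simp add: fclass_def)
next
  assume pq: "p - q \<in> fideal R"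
  show "fclass (fideal R) p = fclass (fideal R) q"
  proof (auto simp: fclass_def)
    fix x assume "p - x \<in> fideal R"
    from fideal_diff[OF this pq] show "q - x \<in> fideal R" by simp
  next
    fix x assume "q - x \<in> fideal R"
    from fideal.add[OF pq this] show "p - x \<in> fideal R" by simp
  qed
qed

lemma fclass_frep: "fclass (fideal R) (frep (fclass (fideal R) p)) = fclass (fideal R) p"
proof -
  have "p \<in> fclass (fideal R) p" by (simp add: fclass_def fideal.zero)
  hence "frep (fclass (fideal R) p) \<in> fclass (fideal R) p" unfolding frep_def by (rule someI)
  hence "p - frep (fclass (fideal R) p) \<in> fideal R" by (simp add: fclass_def)
  from fideal_uminus[OF this] show ?thesis by (simp add: fclass_eq_iff)
qed

lemma fclass_plus_cong:
  "fclass (fideal R) p = fclass (fideal R) p' \<Longrightarrow> fclass (fideal R) q = fclass (fideal R) q' \<Longrightarrow>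
   fclass (fideal R) (p + q) = fclass (fideal R) (p' + q')"
  unfolding fclass_eq_iff by (drule (1) fideal.add) (simp add: algebra_simps)

lemma fclass_times_cong:
  assumes "fclass (fideal R) p = fclass (fideal R) p'" "fclass (fideal R) q = fclass (fideal R) q'"
  shows "fclass (fideal R) (p * q) = fclass (fideal R) (p' * q')"
proof -
  have "(p - p') * q \<in> fideal R" "p' * (q - q') \<in> fideal R"
    using assms by (simp_all add: fclass_eq_iff fideal_times)
  from fideal.add[OF this] show ?thesis by (simp add: fclass_eq_iff algebra_simps)
qed

lemma fclass_uminus_cong:
  "fclass (fideal R) p = fclass (fideal R) p' \<Longrightarrow> fclass (fideal R) (- p) = fclass (fideal R) (- p')"
  unfolding fclass_eq_iff by (drule fideal_uminus) simp

lemma fus_rels_commute: "fus_rels A e i j = fus_rels A e j i"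
  unfolding fus_rels_def by (simp only: insert_commute[of i j])

lemma Abar_commute: "Abar A e i j = Abar A e j i"
  by (simp only: Abar_def fus_rels_commute[of A e i j])

section \<open>Algebras given by their operations\<close>

locale kalgebra =
  fixes K :: "('k::field, 'a) kalg"
  assumes is_kalg: "is_kalg K"
begin

lemma zer_closed: "zer K \<in> car K"
  and one_closed: "one K \<in> car K"
  and add_closed: "x \<in> car K \<Longrightarrow> y \<in> car K \<Longrightarrow> add K x y \<in> car K"
  and mul_closed: "x \<in> car K \<Longrightarrow> y \<in> car K \<Longrightarrow> mul K x y \<in> car K"
  and neg_closed: "x \<in> car K \<Longrightarrow> neg K x \<in> car K"
  and smul_closed: "x \<in> car K \<Longrightarrow> smul K c x \<in> car K"
  using is_kalg unfolding is_kalg_def by blast+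

lemmas closed = zer_closed one_closed add_closed mul_closed neg_closed smul_closed

lemma a_assoc: "x \<in> car K \<Longrightarrow> y \<in> car K \<Longrightarrow> z \<in> car K \<Longrightarrow> add K (add K x y) z = add K x (add K y z)"
  and m_assoc: "x \<in> car K \<Longrightarrow> y \<in> car K \<Longrightarrow> z \<in> car K \<Longrightarrow> mul K (mul K x y) z = mul K x (mul K y z)"
  and r_distr: "x \<in> car K \<Longrightarrow> y \<in> car K \<Longrightarrow> z \<in> car K \<Longrightarrow> mul K x (add K y z) = add K (mul K x y) (mul K x z)"
  and l_distr: "x \<in> car K \<Longrightarrow> y \<in> car K \<Longrightarrow> z \<in> car K \<Longrightarrow> mul K (add K x y) z = add K (mul K x z) (mul K y z)"
  and a_comm: "x \<in> car K \<Longrightarrow> y \<in> car K \<Longrightarrow> add K x y = add K y x"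
  and r_zero: "x \<in> car K \<Longrightarrow> add K x (zer K) = x"
  and r_neg: "x \<in> car K \<Longrightarrow> add K x (neg K x) = zer K"
  and l_one: "x \<in> car K \<Longrightarrow> mul K (one K) x = x"
  and r_one: "x \<in> car K \<Longrightarrow> mul K x (one K) = x"
  and smul_add: "x \<in> car K \<Longrightarrow> y \<in> car K \<Longrightarrow> smul K c (add K x y) = add K (smul K c x) (smul K c y)"
  and add_smul: "x \<in> car K \<Longrightarrow> smul K (c + d) x = add K (smul K c x) (smul K d x)"
  and smul_smul: "x \<in> car K \<Longrightarrow> smul K (c * d) x = smul K c (smul K d x)"
  and one_smul: "x \<in> car K \<Longrightarrow> smul K 1 x = x"
  and smul_mul_left: "x \<in> car K \<Longrightarrow> y \<in> car K \<Longrightarrow> mul K (smul K c x) y = smul K c (mul K x y)"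
  and smul_mul_right: "x \<in> car K \<Longrightarrow> y \<in> car K \<Longrightarrow> mul K x (smul K c y) = smul K c (mul K x y)"
  using is_kalg unfolding is_kalg_def by blast+

lemma l_zero: "x \<in> car K \<Longrightarrow> add K (zer K) x = x"
  using a_comm r_zero zer_closed by metis

lemma l_neg: "x \<in> car K \<Longrightarrow> add K (neg K x) x = zer K"
  using a_comm r_neg neg_closed by metis

lemma a_lcomm: "x \<in> car K \<Longrightarrow> y \<in> car K \<Longrightarrow> z \<in> car K \<Longrightarrow> add K x (add K y z) = add K y (add K x z)"
  by (metis a_assoc a_comm)

lemma add_left_cancel:
  assumes "x \<in> car K" "y \<in> car K" "z \<in> car K" "add K x y = add K x z" shows "y = z"
  by (metis assms a_assoc l_neg l_zero neg_closed)

lemma add_idem_eq_zer: "x \<in> car K \<Longrightarrow> add K x x = x \<Longrightarrow> x = zer K"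
  using add_left_cancel[of x x "zer K"] r_zero zer_closed by auto

lemma zero_smul: "x \<in> car K \<Longrightarrow> smul K 0 x = zer K"
  by (rule add_idem_eq_zer) (auto simp: closed add_smul[symmetric])

lemma smul_zer: "smul K c (zer K) = zer K"
  by (metis smul_smul zer_closed mult_zero_right zero_smul)

lemma neg_eq_smul: "x \<in> car K \<Longrightarrow> neg K x = smul K (-1) x"
  by (metis add_left_cancel add_smul closed(5,6) one_smul r_neg add.right_inverse zero_smul)

lemma l_null: "x \<in> car K \<Longrightarrow> mul K (zer K) x = zer K"
  by (metis smul_mul_left zer_closed zero_smul mul_closed)

lemma r_null: "x \<in> car K \<Longrightarrow> mul K x (zer K) = zer K"
  by (metis smul_mul_right zer_closed zero_smul mul_closed)

lemma gen_subalg_subset: assumes "G \<subseteq> car K" shows "gen_subalg K G \<subseteq> car K"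
proof
  fix x assume "x \<in> gen_subalg K G"
  thus "x \<in> car K" by (induction rule: gen_subalg.induct) (use assms in \<open>auto simp: closed\<close>)
qed

end

section \<open>Linear maps and the tensor square\<close>

definition klinear :: "('k, 'a) kalg \<Rightarrow> ('k, 'b) kalg \<Rightarrow> ('a \<Rightarrow> 'b) \<Rightarrow> bool" where
  "klinear K L f \<longleftrightarrow> (\<forall>x\<in>car K. f x \<in> car L) \<and>
     (\<forall>x\<in>car K. \<forall>y\<in>car K. f (add K x y) = add L (f x) (f y)) \<and>
     (\<forall>c. \<forall>x\<in>car K. f (smul K c x) = smul L c (f x)) \<and> f (zer K) = zer L"

definition alg_hom :: "('k, 'a) kalg \<Rightarrow> ('k, 'b) kalg \<Rightarrow> ('a \<Rightarrow> 'b) \<Rightarrow> bool" where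
  "alg_hom K L f \<longleftrightarrow> klinear K L f \<and> f (one K) = one L \<and>
     (\<forall>x\<in>car K. \<forall>y\<in>car K. f (mul K x y) = mul L (f x) (f y))"

lemma klinear_comp: "klinear K L f \<Longrightarrow> klinear L M g \<Longrightarrow> klinear K M (\<lambda>x. g (f x))"
  by (auto simp: klinear_def)

lemma klinear_ident: "klinear K K (\<lambda>x. x)"
  by (auto simp: klinear_def)

lemma alg_iso_imp_alg_hom:
  assumes "is_kalg K" "is_kalg L" "alg_iso K L f" shows "alg_hom K L f"
proof -
  interpret K: kalgebra K by (rule kalgebra.intro) fact
  interpret L: kalgebra L by (rule kalgebra.intro) fact
  have maps: "\<forall>x\<in>car K. f x \<in> car L" and ops: "\<forall>x\<in>car K. \<forall>y\<in>car K. f (add K x y) = add L (f x) (f y)"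
    using assms(3) by (auto simp: alg_iso_def bij_betw_def)
  have "add L (f (zer K)) (f (zer K)) = f (zer K)"
    using ops K.zer_closed K.r_zero by metis
  hence "f (zer K) = zer L" using L.add_idem_eq_zer maps K.zer_closed by blast
  with assms(3) maps show ?thesis by (auto simp: alg_hom_def alg_iso_def klinear_def)
qed

lemmas tens_eq_trans [trans] = tens_eq.trans

definition tmap2 :: "('a \<Rightarrow> 'b) \<Rightarrow> ('a \<Rightarrow> 'b) \<Rightarrow> ('a \<times> 'a) list \<Rightarrow> ('b \<times> 'b) list" where
  "tmap2 f g t = map (\<lambda>(p, q). (f p, g q)) t"

lemma tmap2_simps [simp]:
  "tmap2 f g [] = []" "tmap2 f g (x # t) = (f (fst x), g (snd x)) # tmap2 f g t"
  "tmap2 f g (t @ u) = tmap2 f g t @ tmap2 f g u"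
  by (auto simp: tmap2_def split: prod.splits)

lemma tmap2_ident: "tmap2 (\<lambda>x. x) (\<lambda>x. x) t = t"
  by (induction t) auto

lemma tmap2_tmap2: "tmap2 f g (tmap2 f' g' t) = tmap2 (\<lambda>x. f (f' x)) (\<lambda>x. g (g' x)) t"
  by (induction t) auto

lemma tmap2_cong:
  "(\<And>p q. (p, q) \<in> set t \<Longrightarrow> f p = f' p \<and> g q = g' q) \<Longrightarrow> tmap2 f g t = tmap2 f' g' t"
  by (induction t) (auto, metis prod.collapse, metis prod.collapse)

lemma tensor_ops_eq_tmap2:
  "tmap f t = tmap2 f f t" "tlmul K a t = tmap2 (mul K a) (\<lambda>x. x) t"
  "trmul K t b = tmap2 (\<lambda>x. x) (\<lambda>x. mul K x b) t" "tneg K t = tmap2 (neg K) (\<lambda>x. x) t"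
  "tscal K c t = tmap2 (smul K c) (\<lambda>x. x) t"
  by (simp_all add: tmap_def tlmul_def trmul_def tneg_def tscal_def tmap2_def)

lemma tens_eq_tmap2:
  assumes "tens_eq K t u" and f: "klinear K L f" and g: "klinear K L g"
  shows "tens_eq L (tmap2 f g t) (tmap2 f g u)"
  using assms(1)
proof (induction rule: tens_eq.induct)
  case (sym t u) thus ?case by (blast intro: tens_eq.sym)
next
  case (trans t u v) thus ?case by (blast intro: tens_eq.trans)
next
  case (app t t' u u') thus ?case by (simp add: tens_eq.app)
next
  case (swap t u) thus ?case by (simp add: tens_eq.swap)
qed (use f g in \<open>auto simp: klinear_def tens_eq.refl tens_eq.addl tens_eq.addr tens_eq.scal tens_eq.zero\<close>)

lemma tens_eq_map_pointwise:
  "(\<And>x. x \<in> set t \<Longrightarrow> tens_eq K [h x] [h' x]) \<Longrightarrow> tens_eq K (map h t) (map h' t)"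
proof (induction t)
  case (Cons x t)
  hence "tens_eq K ([h x] @ map h t) ([h' x] @ map h' t)" by (intro tens_eq.app) auto
  thus ?case by simp
qed (simp add: tens_eq.refl)

lemma tswap_cong:
  assumes zero_smul: "\<And>y. y \<in> car K \<Longrightarrow> smul K 0 y = zer K" and "tens_eq K t u"
  shows "tens_eq K (tswap t) (tswap u)"
  using assms(2)
proof (induction rule: tens_eq.induct)
  case (sym t u) thus ?case by (blast intro: tens_eq.sym)
next
  case (trans t u v) thus ?case by (blast intro: tens_eq.trans)
next
  case (zero y)
  have "tens_eq K [] [(smul K 0 y, y)]" using tens_eq.zero[OF zero] by (simp add: zero_smul zero)
  also have "tens_eq K [(smul K 0 y, y)] [(y, smul K 0 y)]" by (rule tens_eq.scal[OF zero zero])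
  finally show ?case by (simp add: zero_smul zero tswap_def)
next
  case (scal x y c) thus ?case using tens_eq.sym[OF tens_eq.scal[of y K x c]] by (simp add: tswap_def)
qed (simp_all add: tswap_def tens_eq.refl tens_eq.app tens_eq.swap tens_eq.addl tens_eq.addr)

context kalgebra
begin

lemma klinear_lmul: "a \<in> car K \<Longrightarrow> klinear K K (mul K a)"
  by (auto simp: klinear_def closed r_distr smul_mul_right r_null)

lemma klinear_rmul: "b \<in> car K \<Longrightarrow> klinear K K (\<lambda>x. mul K x b)"
  by (auto simp: klinear_def closed l_distr smul_mul_left l_null)

lemma klinear_smul: "klinear K K (smul K c)"
  by (auto simp: klinear_def closed smul_add smul_smul[symmetric] mult.commute smul_zer)

lemma klinear_neg: "klinear K K (neg K)"
  by (auto simp: klinear_def closed neg_eq_smul smul_add smul_smul[symmetric] mult.commute smul_zer)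

lemma klinear_neg_commute: "klinear K K f \<Longrightarrow> x \<in> car K \<Longrightarrow> f (neg K x) = neg K (f x)"
  by (simp add: klinear_def neg_eq_smul)

lemma tens_eq_neg_neg: "p \<in> car K \<Longrightarrow> q \<in> car K \<Longrightarrow> tens_eq K [(neg K p, neg K q)] [(p, q)]"
  using tens_eq.scal[of p K "smul K (-1) q" "-1"]
  by (simp add: neg_eq_smul smul_closed smul_smul[symmetric] one_smul)

lemma tens_eq_append_tneg: "set t \<subseteq> car K \<times> car K \<Longrightarrow> tens_eq K (t @ tneg K t) []"
proof (induction t)
  case Nil show ?case by (simp add: tneg_def tens_eq.refl)
next
  case (Cons pq t)
  obtain p q where pq: "pq = (p, q)" "p \<in> car K" "q \<in> car K" using Cons.prems by (cases pq) auto
  have "tens_eq K ([(p, q)] @ (t @ [(neg K p, q)]) @ tneg K t) ([(p, q)] @ ([(neg K p, q)] @ t) @ tneg K t)"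
    by (intro tens_eq.app tens_eq.refl tens_eq.swap)
  also have "[(p, q)] @ ([(neg K p, q)] @ t) @ tneg K t = [(p, q), (neg K p, q)] @ (t @ tneg K t)" by simp
  also have "tens_eq K \<dots> ([] @ [])"
  proof (rule tens_eq.app)
    have "tens_eq K [(p, q), (neg K p, q)] [(add K p (neg K p), q)]"
      by (rule tens_eq.sym, rule tens_eq.addl) (simp_all add: pq closed)
    also have "tens_eq K [(add K p (neg K p), q)] []"
      using tens_eq.sym[OF tens_eq.zero[OF pq(3)]] by (simp add: r_neg pq)
    finally show "tens_eq K [(p, q), (neg K p, q)] []" .
    show "tens_eq K (t @ tneg K t) []" using Cons by simp
  qed
  finally show ?case by (simp add: pq tneg_def)
qed

lemma tens_eq_Nil_if_double:
  assumes t: "set t \<subseteq> car K \<times> car K" and double: "tens_eq K t (t @ t)"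
  shows "tens_eq K t []"
proof -
  have "tens_eq K [] (t @ tneg K t)" by (rule tens_eq.sym, rule tens_eq_append_tneg[OF t])
  also have "tens_eq K \<dots> ((t @ t) @ tneg K t)" by (rule tens_eq.app[OF double tens_eq.refl])
  also have "\<dots> = t @ (t @ tneg K t)" by simp
  also have "tens_eq K \<dots> (t @ [])" by (rule tens_eq.app[OF tens_eq.refl tens_eq_append_tneg[OF t]])
  finally show ?thesis by (simp add: tens_eq.sym)
qed

end

section \<open>Double brackets\<close>

locale dbl_bracket_alg = kalgebra K for K :: "('k::field, 'a) kalg" +
  fixes e :: "'i \<Rightarrow> 'a" and I :: "'i list" and br :: "'a \<Rightarrow> 'a \<Rightarrow> ('a \<times> 'a) list"
  assumes dbl_bracket: "dbl_bracket K e I br"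
begin

lemma br_closed: "x \<in> car K \<Longrightarrow> y \<in> car K \<Longrightarrow> set (br x y) \<subseteq> car K \<times> car K"
  and br_add_right: "x \<in> car K \<Longrightarrow> y \<in> car K \<Longrightarrow> z \<in> car K \<Longrightarrow>
    tens_eq K (br x (add K y z)) (br x y @ br x z)"
  and br_smul_right: "x \<in> car K \<Longrightarrow> y \<in> car K \<Longrightarrow> tens_eq K (br x (smul K c y)) (tscal K c (br x y))"
  and br_antisym: "x \<in> car K \<Longrightarrow> y \<in> car K \<Longrightarrow> tens_eq K (br x y) (tneg K (tswap (br y x)))"
  and br_leibniz: "x \<in> car K \<Longrightarrow> y \<in> car K \<Longrightarrow> z \<in> car K \<Longrightarrow>
    tens_eq K (br x (mul K y z)) (trmul K (br x y) z @ tlmul K y (br x z))"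
  and br_kspan_right: "b \<in> kspan K e I \<Longrightarrow> x \<in> car K \<Longrightarrow> tens_eq K (br x b) []"
  using dbl_bracket unfolding dbl_bracket_def by blast+

lemma br_one_right: assumes x: "x \<in> car K" shows "tens_eq K (br x (one K)) []"
proof (rule tens_eq_Nil_if_double)
  show t: "set (br x (one K)) \<subseteq> car K \<times> car K" by (rule br_closed[OF x one_closed])
  have "tens_eq K (br x (mul K (one K) (one K))) (trmul K (br x (one K)) (one K) @ tlmul K (one K) (br x (one K)))"
    by (rule br_leibniz[OF x one_closed one_closed])
  also have "trmul K (br x (one K)) (one K) = br x (one K)"
    unfolding tensor_ops_eq_tmap2 by (subst tmap2_cong[where f'="\<lambda>x. x" and g'="\<lambda>x. x"]) (use t in \<open>auto simp: r_one tmap2_ident\<close>)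
  also have "tlmul K (one K) (br x (one K)) = br x (one K)"
    unfolding tensor_ops_eq_tmap2 by (subst tmap2_cong[where f'="\<lambda>x. x" and g'="\<lambda>x. x"]) (use t in \<open>auto simp: l_one tmap2_ident\<close>)
  finally show "tens_eq K (br x (one K)) (br x (one K) @ br x (one K))" by (simp add: r_one one_closed)
qed

lemma br_swap_transport:
  assumes x: "x \<in> car K" and y: "y \<in> car K" and f: "klinear K K f" and g: "klinear K K g"
    and h: "tens_eq K (br y x) (tmap2 f g (br y x))"
  shows "tens_eq K (br x y) (tmap2 g f (br x y))"
proof -
  have "tens_eq K (br x y) (tneg K (tswap (br y x)))" by (rule br_antisym[OF x y])
  also have "tens_eq K \<dots> (tneg K (tswap (tmap2 f g (tneg K (tswap (br x y))))))"
  proof -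
    have "tens_eq K (br y x) (tmap2 f g (tneg K (tswap (br x y))))"
      using h tens_eq_tmap2[OF br_antisym[OF y x] f g] by (rule tens_eq.trans)
    from tswap_cong[OF zero_smul this] show ?thesis
      unfolding tensor_ops_eq_tmap2 by (rule tens_eq_tmap2[OF _ klinear_neg klinear_ident])
  qed
  also have "\<dots> = map (\<lambda>(p, q). (neg K (g p), f (neg K q))) (br x y)"
    by (auto simp: tneg_def tswap_def tmap2_def split: prod.splits)
  also have "tens_eq K \<dots> (map (\<lambda>(p, q). (g p, f q)) (br x y))"
  proof (rule tens_eq_map_pointwise)
    fix pq assume "pq \<in> set (br x y)"
    then obtain p q where pq: "pq = (p, q)" "p \<in> car K" "q \<in> car K" using br_closed[OF x y] by auto
    show "tens_eq K [case pq of (p, q) \<Rightarrow> (neg K (g p), f (neg K q))] [case pq of (p, q) \<Rightarrow> (g p, f q)]"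
      using tens_eq_neg_neg[of "g p" "f q"] pq f g by (auto simp: klinear_neg_commute klinear_def)
  qed
  finally show ?thesis by (simp add: tmap2_def)
qed

end

locale bracket_hom =
  K: dbl_bracket_alg K eK IK brK + L: dbl_bracket_alg L eL IL brL
  for K :: "('k::field, 'a) kalg" and eK :: "'i \<Rightarrow> 'a" and IK brK
    and L :: "('k, 'b) kalg" and eL :: "'j \<Rightarrow> 'b" and IL brL +
  fixes f :: "'a \<Rightarrow> 'b"
  assumes hom: "alg_hom K L f"
begin

definition intertwines :: "'a \<Rightarrow> 'a \<Rightarrow> bool" where
  "intertwines x y \<longleftrightarrow> tens_eq L (brL (f x) (f y)) (tmap f (brK x y))"

lemma f_closed: "x \<in> car K \<Longrightarrow> f x \<in> car L"
  and f_add: "x \<in> car K \<Longrightarrow> y \<in> car K \<Longrightarrow> f (add K x y) = add L (f x) (f y)"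
  and f_smul: "x \<in> car K \<Longrightarrow> f (smul K c x) = smul L c (f x)"
  and f_mul: "x \<in> car K \<Longrightarrow> y \<in> car K \<Longrightarrow> f (mul K x y) = mul L (f x) (f y)"
  and f_one: "f (one K) = one L"
  using hom by (auto simp: alg_hom_def klinear_def)

lemma f_neg: "x \<in> car K \<Longrightarrow> f (neg K x) = neg L (f x)"
  by (simp add: K.neg_eq_smul L.neg_eq_smul f_smul f_closed)

lemma tens_eq_tmap: "tens_eq K t u \<Longrightarrow> tens_eq L (tmap f t) (tmap f u)"
  using hom unfolding tensor_ops_eq_tmap2 alg_hom_def by (blast intro: tens_eq_tmap2)

lemma intertwines_add_right:
  assumes x: "x \<in> car K" and y: "y \<in> car K" and z: "z \<in> car K"
    and "intertwines x y" "intertwines x z"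
  shows "intertwines x (add K y z)"
proof -
  have "brL (f x) (f (add K y z)) = brL (f x) (add L (f y) (f z))" by (simp add: f_add y z)
  also have "tens_eq L \<dots> (brL (f x) (f y) @ brL (f x) (f z))" by (rule L.br_add_right) (simp_all add: f_closed x y z)
  also have "tens_eq L \<dots> (tmap f (brK x y) @ tmap f (brK x z))"
    using assms(4,5) unfolding intertwines_def by (rule tens_eq.app)
  also have "\<dots> = tmap f (brK x y @ brK x z)" by (simp add: tmap_def)
  also have "tens_eq L \<dots> (tmap f (brK x (add K y z)))" by (rule tens_eq_tmap, rule tens_eq.sym, rule K.br_add_right[OF x y z])
  finally show ?thesis unfolding intertwines_def .
qed

lemma intertwines_smul_right:
  assumes x: "x \<in> car K" and y: "y \<in> car K" and "intertwines x y"
  shows "intertwines x (smul K c y)"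
proof -
  have "brL (f x) (f (smul K c y)) = brL (f x) (smul L c (f y))" by (simp add: f_smul y)
  also have "tens_eq L \<dots> (tscal L c (brL (f x) (f y)))" by (rule L.br_smul_right) (simp_all add: f_closed x y)
  also have "tens_eq L \<dots> (tscal L c (tmap f (brK x y)))"
    using assms(3) unfolding intertwines_def tensor_ops_eq_tmap2 by (rule tens_eq_tmap2[OF _ L.klinear_smul klinear_ident])
  also have "\<dots> = tmap f (tscal K c (brK x y))"
    unfolding tensor_ops_eq_tmap2 tmap2_tmap2 by (rule tmap2_cong) (use K.br_closed[OF x y] in \<open>auto simp: f_smul\<close>)
  also have "tens_eq L \<dots> (tmap f (brK x (smul K c y)))" by (rule tens_eq_tmap, rule tens_eq.sym, rule K.br_smul_right[OF x y])
  finally show ?thesis unfolding intertwines_def .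
qed

lemma intertwines_mul_right:
  assumes x: "x \<in> car K" and y: "y \<in> car K" and z: "z \<in> car K"
    and hy: "intertwines x y" and hz: "intertwines x z"
  shows "intertwines x (mul K y z)"
proof -
  have fx: "f x \<in> car L" "f y \<in> car L" "f z \<in> car L" by (simp_all add: f_closed x y z)
  have "brL (f x) (f (mul K y z)) = brL (f x) (mul L (f y) (f z))" by (simp add: f_mul y z)
  also have "tens_eq L \<dots> (trmul L (brL (f x) (f y)) (f z) @ tlmul L (f y) (brL (f x) (f z)))"
    by (rule L.br_leibniz[OF fx])
  also have "tens_eq L \<dots> (trmul L (tmap f (brK x y)) (f z) @ tlmul L (f y) (tmap f (brK x z)))"
    unfolding tensor_ops_eq_tmap2(2,3)
    by (rule tens_eq.app; rule tens_eq_tmap2[where K = L])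
       (use hy hz fx in \<open>simp_all add: intertwines_def L.klinear_lmul L.klinear_rmul klinear_ident\<close>)
  also have "\<dots> = tmap f (trmul K (brK x y) z @ tlmul K y (brK x z))"
    unfolding tensor_ops_eq_tmap2 tmap2_tmap2 tmap2_simps
    by (intro arg_cong2[where f="(@)"] tmap2_cong)
       (use K.br_closed[OF x y] K.br_closed[OF x z] y z in \<open>auto simp: f_mul\<close>)
  also have "tens_eq L \<dots> (tmap f (brK x (mul K y z)))" by (rule tens_eq_tmap, rule tens_eq.sym, rule K.br_leibniz[OF x y z])
  finally show ?thesis unfolding intertwines_def .
qed

lemma intertwines_one_right: assumes x: "x \<in> car K" shows "intertwines x (one K)"
proof -
  have "tens_eq L (brL (f x) (one L)) []" by (rule L.br_one_right[OF f_closed[OF x]])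
  also have "tens_eq L [] (tmap f (brK x (one K)))"
    using tens_eq.sym[OF tens_eq_tmap[OF K.br_one_right[OF x]]] by (simp add: tmap_def)
  finally show ?thesis by (simp add: intertwines_def f_one)
qed

lemma intertwines_swap:
  assumes x: "x \<in> car K" and y: "y \<in> car K" and "intertwines y x"
  shows "intertwines x y"
proof -
  have "tens_eq L (brL (f x) (f y)) (tneg L (tswap (brL (f y) (f x))))" by (rule L.br_antisym) (simp_all add: f_closed x y)
  also have "tens_eq L \<dots> (tneg L (tswap (tmap f (brK y x))))"
  proof -
    have "tens_eq L (tswap (brL (f y) (f x))) (tswap (tmap f (brK y x)))"
      using tswap_cong[of L] L.zero_smul assms(3) unfolding intertwines_def by blast
    thus ?thesis unfolding tensor_ops_eq_tmap2(4) by (rule tens_eq_tmap2[OF _ L.klinear_neg klinear_ident])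
  qed
  also have "\<dots> = tmap f (tneg K (tswap (brK y x)))"
    using K.br_closed[OF y x] by (auto simp: tswap_def tneg_def tmap_def f_neg split: prod.splits)
  also have "tens_eq L \<dots> (tmap f (brK x y))" by (rule tens_eq_tmap, rule tens_eq.sym, rule K.br_antisym[OF x y])
  finally show ?thesis unfolding intertwines_def .
qed

lemma intertwines_gen_subalg:
  assumes G: "G \<subseteq> car K" and gens: "\<And>x y. x \<in> G \<Longrightarrow> y \<in> G \<Longrightarrow> intertwines x y"
    and x: "x \<in> gen_subalg K G" and y: "y \<in> gen_subalg K G"
  shows "intertwines x y"
proof -
  have S: "gen_subalg K G \<subseteq> car K" by (rule K.gen_subalg_subset[OF G])
  have closure: "intertwines x y" if "x \<in> car K" "y \<in> gen_subalg K G" "\<And>g. g \<in> G \<Longrightarrow> intertwines x g" for x y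
    using that(2)
  proof (induction rule: gen_subalg.induct)
    case (gen y) thus ?case using that(3) by blast
  next
    case one thus ?case by (rule intertwines_one_right[OF that(1)])
  next
    case (add y z) thus ?case using S that(1) by (intro intertwines_add_right) auto
  next
    case (mul y z) thus ?case using S that(1) by (intro intertwines_mul_right) auto
  next
    case (smul y c) thus ?case using S that(1) by (intro intertwines_smul_right) auto
  qed
  have "intertwines x g" if g: "g \<in> G" for g
  proof (rule intertwines_swap)
    show "intertwines g x" by (rule closure[OF _ x gens]) (use G g in auto)
  qed (use G S g x in auto)
  thus ?thesis using S x by (intro closure[OF _ y]) auto
qed

end

section \<open>Algebras over \<open>B\<close>\<close>

locale B_alg = kalgebra K for K :: "('k::field, 'a) kalg" +
  fixes e :: "'i \<Rightarrow> 'a" and I :: "'i list"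
  assumes B_algebra: "B_algebra K e I"
begin

lemma distinct_I: "distinct I"
  and idem_closed: "s \<in> set I \<Longrightarrow> e s \<in> car K"
  and idem_mul: "s \<in> set I \<Longrightarrow> t \<in> set I \<Longrightarrow> mul K (e s) (e t) = (if s = t then e s else zer K)"
  and lincomb_ones: "lincomb K e (\<lambda>_. 1) I = one K"
  using B_algebra unfolding B_algebra_def by blast+

lemma lincomb_Nil [simp]: "lincomb K e c [] = zer K"
  and lincomb_Cons [simp]: "lincomb K e c (s # L) = add K (smul K (c s) (e s)) (lincomb K e c L)"
  by (simp_all add: lincomb_def)

lemma lincomb_cong: "(\<And>s. s \<in> set L \<Longrightarrow> c s = d s) \<Longrightarrow> lincomb K e c L = lincomb K e d L"
  unfolding lincomb_def by (induction L) auto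

lemma lincomb_closed: "set L \<subseteq> set I \<Longrightarrow> lincomb K e c L \<in> car K"
  by (induction L) (auto simp: closed idem_closed)

lemma kspan_closed: "d \<in> kspan K e I \<Longrightarrow> d \<in> car K"
  by (auto simp: kspan_def lincomb_closed)

lemma lincomb_in_kspan: "lincomb K e c I \<in> kspan K e I"
  by (auto simp: kspan_def)

lemma lincomb_add:
  "set L \<subseteq> set I \<Longrightarrow> lincomb K e (\<lambda>s. c s + d s) L = add K (lincomb K e c L) (lincomb K e d L)"
proof (induction L)
  case (Cons s L)
  hence s: "e s \<in> car K" and L: "set L \<subseteq> set I" using idem_closed by auto
  have "lincomb K e (\<lambda>s. c s + d s) (s # L) =
      add K (add K (smul K (c s) (e s)) (smul K (d s) (e s))) (add K (lincomb K e c L) (lincomb K e d L))"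
    using Cons L s by (simp add: add_smul)
  also have "\<dots> = add K (lincomb K e c (s # L)) (lincomb K e d (s # L))"
    using s lincomb_closed[OF L] by (simp add: closed a_assoc a_lcomm)
  finally show ?case .
qed (simp add: r_zero zer_closed)

lemma lincomb_smul: "set L \<subseteq> set I \<Longrightarrow> smul K k (lincomb K e c L) = lincomb K e (\<lambda>s. k * c s) L"
  by (induction L) (auto simp: smul_zer smul_add smul_smul closed idem_closed lincomb_closed)

lemma lincomb_neg: "set L \<subseteq> set I \<Longrightarrow> neg K (lincomb K e c L) = lincomb K e (\<lambda>s. - c s) L"
  by (simp add: neg_eq_smul lincomb_closed lincomb_smul)

lemma lincomb_zero: "set L \<subseteq> set I \<Longrightarrow> lincomb K e (\<lambda>_. 0) L = zer K"
  using lincomb_smul[of L 0 "\<lambda>_. 0"] zero_smul[OF lincomb_closed] by simp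

lemma idem_mul_lincomb:
  assumes "s \<in> set I" "set L \<subseteq> set I" "distinct L"
  shows "mul K (e s) (lincomb K e c L) = (if s \<in> set L then smul K (c s) (e s) else zer K)"
  using assms(2,3)
proof (induction L)
  case (Cons t L)
  have "mul K (e s) (lincomb K e c (t # L)) =
      add K (smul K (c t) (mul K (e s) (e t))) (mul K (e s) (lincomb K e c L))"
    using Cons.prems assms(1) by (simp add: r_distr smul_mul_right closed idem_closed lincomb_closed)
  thus ?case using Cons assms(1) by (auto simp: idem_mul smul_zer l_zero r_zero closed idem_closed)
qed (simp add: r_null idem_closed assms(1))

lemma lincomb_mul_idem:
  assumes "s \<in> set I" "set L \<subseteq> set I" "distinct L"
  shows "mul K (lincomb K e c L) (e s) = (if s \<in> set L then smul K (c s) (e s) else zer K)"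
  using assms(2,3)
proof (induction L)
  case (Cons t L)
  have "mul K (lincomb K e c (t # L)) (e s) =
      add K (smul K (c t) (mul K (e t) (e s))) (mul K (lincomb K e c L) (e s))"
    using Cons.prems assms(1) by (simp add: l_distr smul_mul_left closed idem_closed lincomb_closed)
  thus ?case using Cons assms(1) by (auto simp: idem_mul smul_zer l_zero r_zero closed idem_closed)
qed (simp add: l_null idem_closed assms(1))

lemma lincomb_mul:
  "set L \<subseteq> set I \<Longrightarrow> distinct L \<Longrightarrow>
    mul K (lincomb K e c L) (lincomb K e d L) = lincomb K e (\<lambda>s. c s * d s) L"
proof (induction L)
  case (Cons t L)
  hence t: "t \<in> set I" "e t \<in> car K" and L: "set L \<subseteq> set I" "distinct L" "t \<notin> set L"
    using idem_closed by auto
  have "mul K (lincomb K e c (t # L)) (lincomb K e d (t # L)) =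
      add K (smul K (c t) (mul K (e t) (lincomb K e d (t # L)))) (mul K (lincomb K e c L) (lincomb K e d (t # L)))"
    using t L by (simp add: l_distr smul_mul_left closed lincomb_closed)
  also have "mul K (e t) (lincomb K e d (t # L)) = smul K (d t) (e t)"
    using idem_mul_lincomb[of t "t # L" d] Cons.prems t by simp
  also have "mul K (lincomb K e c L) (lincomb K e d (t # L)) = mul K (lincomb K e c L) (lincomb K e d L)"
    using t L by (simp add: r_distr smul_mul_right closed lincomb_closed lincomb_mul_idem smul_zer l_zero)
  finally show ?case using Cons L t by (simp add: smul_smul[symmetric] mult.commute)
qed (simp add: l_null zer_closed)

lemma lincomb_absorb:
  assumes "\<And>s. c s * d s = d s"
  shows "mul K (lincomb K e c I) (lincomb K e d I) = lincomb K e d I"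
    and "mul K (lincomb K e d I) (lincomb K e c I) = lincomb K e d I"
proof -
  have "(\<lambda>s. c s * d s) = d" "(\<lambda>s. d s * c s) = d" using assms by (auto simp: fun_eq_iff mult.commute)
  thus "mul K (lincomb K e c I) (lincomb K e d I) = lincomb K e d I"
    and "mul K (lincomb K e d I) (lincomb K e c I) = lincomb K e d I"
    by (simp_all add: lincomb_mul distinct_I)
qed

lemma lincomb_indicator:
  "s \<in> set L \<Longrightarrow> set L \<subseteq> set I \<Longrightarrow> distinct L \<Longrightarrow> lincomb K e (\<lambda>t. if t = s then 1 else 0) L = e s"
proof (induction L)
  case (Cons t L)
  show ?case
  proof (cases "t = s")
    case True
    with Cons have "lincomb K e (\<lambda>t. if t = s then 1 else 0) L = lincomb K e (\<lambda>_. 0) L"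
      by (intro lincomb_cong) auto
    with Cons True show ?thesis by (simp add: lincomb_zero one_smul r_zero idem_closed)
  next
    case False
    with Cons have "e s \<in> car K" using idem_closed by auto
    with Cons False show ?thesis by (simp add: zero_smul l_zero idem_closed)
  qed
qed simp

end

locale B_bracket = B_alg K e I + dbl_bracket_alg K e I br
  for K :: "('k::field, 'a) kalg" and e :: "'i \<Rightarrow> 'a" and I and br
begin

lemma br_absorb_lmul:
  assumes d: "d \<in> kspan K e I" and x: "x \<in> car K" and b: "b \<in> car K" and db: "mul K d b = b"
  shows "tens_eq K (br x b) (tmap2 (mul K d) (\<lambda>q. q) (br x b))"
proof -
  have "tens_eq K (br x (mul K d b)) (trmul K (br x d) b @ tlmul K d (br x b))"
    using br_leibniz kspan_closed[OF d] x b by blast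
  also have "tens_eq K \<dots> ([] @ tlmul K d (br x b))"
    using tens_eq_tmap2[OF br_kspan_right[OF d x] klinear_ident klinear_rmul[OF b]]
    unfolding tensor_ops_eq_tmap2 by (intro tens_eq.app tens_eq.refl) simp
  finally show ?thesis using db by (simp add: tensor_ops_eq_tmap2)
qed

lemma br_absorb_rmul:
  assumes d: "d \<in> kspan K e I" and x: "x \<in> car K" and b: "b \<in> car K" and bd: "mul K b d = b"
  shows "tens_eq K (br x b) (tmap2 (\<lambda>q. q) (\<lambda>q. mul K q d) (br x b))"
proof -
  have "tens_eq K (br x (mul K b d)) (trmul K (br x b) d @ tlmul K b (br x d))"
    using br_leibniz kspan_closed[OF d] x b by blast
  also have "tens_eq K \<dots> (trmul K (br x b) d @ [])"
    using tens_eq_tmap2[OF br_kspan_right[OF d x] klinear_lmul[OF b] klinear_ident]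
    unfolding tensor_ops_eq_tmap2 by (intro tens_eq.app tens_eq.refl) simp
  finally show ?thesis using bd by (simp add: tensor_ops_eq_tmap2)
qed

lemma br_block_projection:
  assumes d: "d1 \<in> kspan K e I" "d2 \<in> kspan K e I" "d3 \<in> kspan K e I" "d4 \<in> kspan K e I"
    and a: "a \<in> car K" and b: "b \<in> car K"
    and blocks: "mul K d1 a = a" "mul K a d2 = a" "mul K d3 b = b" "mul K b d4 = b"
  shows "tens_eq K (br a b) (tmap2 (\<lambda>p. mul K d3 (mul K p d2)) (\<lambda>q. mul K d1 (mul K q d4)) (br a b))"
proof -
  have dc: "d1 \<in> car K" "d2 \<in> car K" "d3 \<in> car K" "d4 \<in> car K" using d kspan_closed by auto
  note lin = klinear_lmul[OF dc(1)] klinear_rmul[OF dc(2)] klinear_lmul[OF dc(3)] klinear_rmul[OF dc(4)]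
  have left1: "tens_eq K (br a b) (tmap2 (\<lambda>q. q) (mul K d1) (br a b))"
    by (rule br_swap_transport[OF a b lin(1) klinear_ident br_absorb_lmul[OF d(1) b a blocks(1)]])
  have right2: "tens_eq K (br a b) (tmap2 (\<lambda>q. mul K q d2) (\<lambda>q. q) (br a b))"
    by (rule br_swap_transport[OF a b klinear_ident lin(2) br_absorb_rmul[OF d(2) b a blocks(2)]])
  have "tens_eq K (br a b) (tmap2 (mul K d3) (\<lambda>q. q) (br a b))"
    by (rule br_absorb_lmul[OF d(3) a b blocks(3)])
  also have "tens_eq K \<dots> (tmap2 (mul K d3) (\<lambda>q. mul K q d4) (br a b))"
    using tens_eq_tmap2[OF br_absorb_rmul[OF d(4) a b blocks(4)] lin(3) klinear_ident]
    by (simp add: tmap2_tmap2)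
  also have "tens_eq K \<dots> (tmap2 (mul K d3) (\<lambda>q. mul K (mul K d1 q) d4) (br a b))"
    using tens_eq_tmap2[OF left1 lin(3) lin(4)] by (simp add: tmap2_tmap2)
  also have "tens_eq K \<dots> (tmap2 (\<lambda>p. mul K d3 (mul K p d2)) (\<lambda>q. mul K (mul K d1 q) d4) (br a b))"
    using tens_eq_tmap2[OF right2 lin(3) klinear_comp[OF lin(1) lin(4)]] by (simp add: tmap2_tmap2)
  also have "\<dots> = tmap2 (\<lambda>p. mul K d3 (mul K p d2)) (\<lambda>q. mul K d1 (mul K q d4)) (br a b)"
    by (rule tmap2_cong) (use br_closed[OF a b] dc in \<open>auto simp: m_assoc\<close>)
  finally show ?thesis .
qed

end

section \<open>The fusion algebra\<close>

definition xgen :: "'a \<Rightarrow> ('a, 'i, 'k::field) fbar" where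
  "xgen a = fgen (Inl a)"

definition egen :: "'i \<Rightarrow> 'i \<Rightarrow> ('a, 'i, 'k::field) fbar" where
  "egen p q = fgen (Inr (p, q))"

locale fusion_presentation = B_alg A e I for A :: "('k::field, 'a) kalg" and e :: "'i \<Rightarrow> 'a" and I +
  fixes i j :: 'i
  assumes i_in_I: "i \<in> set I" and j_in_I: "j \<in> set I" and i_neq_j: "i \<noteq> j"
begin

abbreviation "J \<equiv> fideal (fus_rels A e i j)"
abbreviation "Q \<equiv> fclass J"
abbreviation "Ab \<equiv> Abar A e i j"
abbreviation "F \<equiv> fusion A e i j"

abbreviation fcong :: "('a, 'i, 'k) fbar \<Rightarrow> ('a, 'i, 'k) fbar \<Rightarrow> bool" (infix "\<approx>" 50) where
  "p \<approx> q \<equiv> p - q \<in> J"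

definition eps :: "('a, 'i, 'k) fbar" where "eps = 1 - xgen (e j)"

lemma J_closed:
  "x \<in> J \<Longrightarrow> y \<in> J \<Longrightarrow> x + y \<in> J" "x \<in> J \<Longrightarrow> y \<in> J \<Longrightarrow> x - y \<in> J" "x \<in> J \<Longrightarrow> - x \<in> J"
  "x \<in> J \<Longrightarrow> a * x \<in> J" "x \<in> J \<Longrightarrow> x * a \<in> J" "0 \<in> J"
  by (auto intro: fideal.add fideal_diff fideal_uminus fideal_times fideal.zero)

lemma fcong_refl: "p \<approx> p"
  by (simp add: J_closed)

lemma fcong_sym: "p \<approx> q \<Longrightarrow> q \<approx> p"
  using J_closed(3) by fastforce

lemma fcong_trans: "p \<approx> q \<Longrightarrow> q \<approx> r \<Longrightarrow> p \<approx> r"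
  using J_closed(1) by fastforce

lemma fcong_plus: "p \<approx> p' \<Longrightarrow> q \<approx> q' \<Longrightarrow> p + q \<approx> p' + q'"
  using J_closed(1) by (fastforce simp: algebra_simps)

lemma fcong_times: "p \<approx> p' \<Longrightarrow> q \<approx> q' \<Longrightarrow> p * q \<approx> p' * q'"
proof -
  assume "p \<approx> p'" "q \<approx> q'"
  hence "(p - p') * q + p' * (q - q') \<in> J" by (intro J_closed(1) J_closed(4) J_closed(5))
  thus ?thesis by (simp add: algebra_simps)
qed

lemma Q_eqI: "p \<approx> q \<Longrightarrow> Q p = Q q"
  by (simp add: fclass_eq_iff)

text \<open>The defining relations, each written as "product = normal form + element of J", so that
  \<open>simp\<close> normalises a word in the matrix units and \<open>blast\<close> collects the remainder in \<open>J\<close>.\<close>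

definition "relE p q r s = egen p q * egen r s - (if q = r then egen p s else 0)"
definition "relD p = egen p p - xgen (e p)"
definition "relX a b = xgen a * xgen b - xgen (mul A a b)"
definition "relA a b = xgen (add A a b) - (xgen a + xgen b)"

lemma relE_in_J: "p \<in> {i, j} \<Longrightarrow> q \<in> {i, j} \<Longrightarrow> r \<in> {i, j} \<Longrightarrow> s \<in> {i, j} \<Longrightarrow> relE p q r s \<in> J"
  unfolding relE_def egen_def fmul_eq_times[symmetric] by (intro fideal.rel) (unfold fus_rels_def, blast)

lemma relD_in_J: "p \<in> {i, j} \<Longrightarrow> relD p \<in> J"
  unfolding relD_def egen_def xgen_def by (intro fideal.rel) (unfold fus_rels_def, blast)

lemma relX_in_J: "a \<in> car A \<Longrightarrow> b \<in> car A \<Longrightarrow> relX a b \<in> J"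
proof -
  assume "a \<in> car A" "b \<in> car A"
  hence "xgen (mul A a b) - xgen a * xgen b \<in> J"
    unfolding xgen_def fmul_eq_times[symmetric] by (intro fideal.rel) (unfold fus_rels_def, blast)
  from J_closed(3)[OF this] show ?thesis by (simp add: relX_def)
qed

lemma relA_in_J: "a \<in> car A \<Longrightarrow> b \<in> car A \<Longrightarrow> relA a b \<in> J"
  unfolding relA_def xgen_def by (intro fideal.rel) (unfold fus_rels_def, blast)

lemma xgen_smul: "a \<in> car A \<Longrightarrow> xgen (smul A c a) \<approx> Poly_Mapping.single [] c * xgen a"
  unfolding xgen_def fscal_eq_times[symmetric] by (intro fideal.rel) (unfold fus_rels_def, blast)

lemma xgen_one: "xgen (one A) \<approx> 1"
  unfolding xgen_def fone_eq_one[symmetric] by (intro fideal.rel) (unfold fus_rels_def, blast)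

lemma xgen_outside: "a \<notin> car A \<Longrightarrow> xgen a \<in> J"
  unfolding xgen_def by (intro fideal.rel) (unfold fus_rels_def, blast)

lemma egen_outside: "p \<notin> {i, j} \<or> q \<notin> {i, j} \<Longrightarrow> egen p q \<in> J"
  unfolding egen_def by (intro fideal.rel) (unfold fus_rels_def, blast)

lemma egen_times:
  "egen p q * egen r s = (if q = r then egen p s else 0) + relE p q r s"
  "egen p q * (egen r s * w) = (if q = r then egen p s * w else 0) + relE p q r s * w"
  by (simp_all add: relE_def left_diff_distrib flip: mult.assoc)

lemma xgen_e: "xgen (e p) = egen p p - relD p"
  by (simp add: relD_def)

lemma xgen_mul: "a \<in> car A \<Longrightarrow> b \<in> car A \<Longrightarrow> xgen (mul A a b) \<approx> xgen a * xgen b"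
  using J_closed(3)[OF relX_in_J] by (simp add: relX_def)

lemma xgen_add: "a \<in> car A \<Longrightarrow> b \<in> car A \<Longrightarrow> xgen (add A a b) \<approx> xgen a + xgen b"
  using relA_in_J by (simp add: relA_def)

lemma xgen_zer: "xgen (zer A) \<in> J"
  using J_closed(3)[OF relA_in_J[OF zer_closed zer_closed]] by (simp add: relA_def r_zero zer_closed)

lemmas matrix_simps = algebra_simps egen_times xgen_e i_neq_j i_neq_j[symmetric] eps_def
lemmas J_intros = J_closed relE_in_J relD_in_J relX_in_J relA_in_J

lemma eps_idem: "eps * eps \<approx> eps"
  by (simp add: matrix_simps) (blast intro: J_intros)

lemma Ab_car: "car Ab = range Q"
  unfolding Abar_def Let_def by auto

lemma Ab_add: "add Ab (Q p) (Q q) = Q (p + q)"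
  unfolding Abar_def Let_def by (simp add: fclass_plus_cong[OF fclass_frep fclass_frep])

lemma Ab_mul: "mul Ab (Q p) (Q q) = Q (p * q)"
  unfolding Abar_def Let_def by (simp add: fclass_times_cong[OF fclass_frep fclass_frep] fmul_eq_times)

lemma Ab_neg: "neg Ab (Q p) = Q (- p)"
  unfolding Abar_def Let_def by (simp add: fclass_uminus_cong[OF fclass_frep])

lemma Ab_smul: "smul Ab c (Q p) = Q (Poly_Mapping.single [] c * p)"
  unfolding Abar_def Let_def by (simp add: fclass_times_cong[OF HOL.refl fclass_frep] fscal_eq_times)

lemma Ab_zer: "zer Ab = Q 0" and Ab_one: "one Ab = Q 1"
  unfolding Abar_def Let_def by (simp_all add: fone_eq_one)

lemmas Ab_simps = Ab_add Ab_mul Ab_neg Ab_zer Ab_one Ab_smul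

lemma iota_eq: "iota A e i j a = Q (xgen a)"
  and munit_eq: "munit A e i j p q = Q (egen p q)"
  and feps_eq: "feps A e i j = Q eps"
  by (simp_all add: iota_def munit_def xgen_def egen_def feps_def sub_def Ab_simps eps_def)

lemma fusion_car: "car F = {Q (eps * p * eps) | p. True}"
  unfolding fusion_def Let_def feps_eq Ab_car by (force simp: Ab_mul mult.assoc)

lemma fusion_ops:
  "add F = add Ab" "mul F = mul Ab" "neg F = neg Ab" "zer F = zer Ab" "smul F = smul Ab" "one F = Q eps"
  unfolding fusion_def Let_def feps_eq by simp_all

lemma fusion_car_subset: "car F \<subseteq> range Q"
  unfolding fusion_car by blast

lemma ball_fusion_car: "(\<forall>x\<in>car F. P x) \<longleftrightarrow> (\<forall>p. P (Q (eps * p * eps)))"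
  unfolding fusion_car by blast

lemma fusion_carI: "Q (eps * p * eps) \<in> car F"
  unfolding fusion_car by blast

lemma is_kalg_fusion: "is_kalg F"
proof -
  have single_Nil_mult: "Poly_Mapping.single [] (c * d) = Poly_Mapping.single [] c * Poly_Mapping.single [] (d :: 'k)" for c d
    by (simp add: mult_single Nil_eq_zero)
  have single_Nil_one: "Poly_Mapping.single [] (1 :: 'k) = 1"
    by (simp add: Nil_eq_zero)
  have one_left: "Q (eps * (eps * p * eps)) = Q (eps * p * eps)" for p
    using fcong_times[OF eps_idem fcong_refl, of "p * eps"] by (intro Q_eqI) (simp add: mult.assoc)
  have one_right: "Q (eps * p * eps * eps) = Q (eps * p * eps)" for p
    using fcong_times[OF fcong_refl eps_idem, of "eps * p"] by (intro Q_eqI) (simp add: mult.assoc)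
  show ?thesis
    unfolding is_kalg_def fusion_ops ball_fusion_car Ab_simps
  proof (intro conjI allI)
    show "Q 0 \<in> car F" using fusion_carI[of 0] by simp
    show "Q eps \<in> car F" using fusion_carI[of 1] Q_eqI[OF eps_idem] by simp
    fix p q c
    show "Q (eps * p * eps + eps * q * eps) \<in> car F"
      using fusion_carI[of "p + q"] by (simp add: algebra_simps)
    show "Q (eps * p * eps * (eps * q * eps)) \<in> car F"
      using fusion_carI[of "p * eps * eps * q"] by (simp add: mult.assoc)
    show "Q (- (eps * p * eps)) \<in> car F" using fusion_carI[of "- p"] by simp
    show "Q (Poly_Mapping.single [] c * (eps * p * eps)) \<in> car F"
      using fusion_carI[of "Poly_Mapping.single [] c * p"] by (simp add: single_Nil_times_left_commute mult.assoc)
    show "Q (eps * p * eps * (Poly_Mapping.single [] c * (eps * q * eps))) =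
        Q (Poly_Mapping.single [] c * (eps * p * eps * (eps * q * eps)))"
      by (simp only: single_Nil_times_left_commute)
  qed (simp_all add: algebra_simps one_left[simplified mult.assoc] one_right[simplified mult.assoc]
      single_Nil_mult single_Nil_one single_add)
qed

lemma fpi_eq: "fpi A e i j a =
    Q (eps * xgen a * eps + egen i j * xgen a * egen j i + egen i j * xgen a * eps + eps * xgen a * egen j i)"
  unfolding fpi_def Let_def feps_eq iota_eq munit_eq Ab_simps by (simp add: mult.assoc add.assoc)

section \<open>Generators of the fusion algebra\<close>

text \<open>The three blocks \<open>e\<^sub>i\<close>, \<open>e\<^sub>j\<close> and \<open>1 - e\<^sub>i - e\<^sub>j\<close> of \<open>A\<close>, indexed by
  \<open>Some i\<close>, \<open>Some j\<close> and \<open>None\<close>, and the corresponding idempotents of \<open>Abar\<close>.\<close>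

definition blocks :: "'i option set" where
  "blocks = {Some i, Some j, None}"

definition bcoeff :: "'i option \<Rightarrow> 'i \<Rightarrow> 'k" where
  "bcoeff b s = (case b of Some p \<Rightarrow> if s = p then 1 else 0 | None \<Rightarrow> if s = i \<or> s = j then 0 else 1)"

definition bidem :: "'i option \<Rightarrow> 'a" where
  "bidem b = lincomb A e (bcoeff b) I"

definition bunit :: "'i option \<Rightarrow> ('a, 'i, 'k) fbar" where
  "bunit b = (case b of Some p \<Rightarrow> egen p p | None \<Rightarrow> 1 - egen i i - egen j j)"

lemma finite_blocks: "finite blocks"
  by (simp add: blocks_def)

lemma bidem_closed: "bidem b \<in> car A"
  by (simp add: bidem_def lincomb_closed)

lemma bidem_in_kspan: "bidem b \<in> kspan A e I"
  by (simp add: bidem_def lincomb_in_kspan)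

lemma bidem_Some: "p \<in> {i, j} \<Longrightarrow> bidem (Some p) = e p"
proof -
  assume p: "p \<in> {i, j}"
  have "bcoeff (Some p) = (\<lambda>s. if s = p then 1 else 0)" by (simp add: fun_eq_iff bcoeff_def)
  thus ?thesis using lincomb_indicator[of p I] i_in_I j_in_I distinct_I p by (auto simp: bidem_def)
qed

lemma bidem_mul:
  assumes "s \<in> blocks" "t \<in> blocks"
  shows "mul A (bidem s) (bidem t) = (if s = t then bidem s else zer A)"
proof -
  have "mul A (bidem s) (bidem t) = lincomb A e (\<lambda>x. bcoeff s x * bcoeff t x) I"
    unfolding bidem_def by (simp add: lincomb_mul distinct_I)
  also have "\<dots> = (if s = t then bidem s else zer A)"
  proof (cases "s = t")
    case False
    with assms have "(\<lambda>x. bcoeff s x * bcoeff t x) = (\<lambda>_. 0)"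
      by (auto simp: blocks_def bcoeff_def fun_eq_iff i_neq_j i_neq_j[symmetric])
    with False show ?thesis by (simp add: lincomb_zero)
  next
    case True
    have "(\<lambda>x. bcoeff t x * bcoeff t x) = bcoeff t" by (simp add: fun_eq_iff bcoeff_def split: option.split)
    with True show ?thesis by (simp add: bidem_def)
  qed
  finally show ?thesis .
qed

lemma bidem_sum: "add A (add A (bidem (Some i)) (bidem (Some j))) (bidem None) = one A"
proof -
  have "add A (add A (bidem (Some i)) (bidem (Some j))) (bidem None) =
      lincomb A e (\<lambda>s. (bcoeff (Some i) s + bcoeff (Some j) s) + bcoeff None s) I"
    unfolding bidem_def by (simp add: lincomb_add)
  also have "\<dots> = lincomb A e (\<lambda>_. 1) I"
    by (rule lincomb_cong) (auto simp: bcoeff_def i_neq_j i_neq_j[symmetric])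
  finally show ?thesis by (simp add: lincomb_ones)
qed

lemma xgen_bidem: "b \<in> blocks \<Longrightarrow> xgen (bidem b) \<approx> bunit b"
proof -
  have Some: "xgen (bidem (Some p)) \<approx> bunit (Some p)" if "p \<in> {i, j}" for p
    using J_closed(3)[OF relD_in_J[OF that]] that by (simp add: bidem_Some bunit_def relD_def)
  have "xgen (one A) \<approx> xgen (add A (bidem (Some i)) (bidem (Some j))) + xgen (bidem None)"
    using xgen_add[of "add A (bidem (Some i)) (bidem (Some j))" "bidem None"]
    by (simp add: bidem_sum bidem_closed closed)
  moreover have "xgen (add A (bidem (Some i)) (bidem (Some j))) + xgen (bidem None) \<approx>
      (xgen (bidem (Some i)) + xgen (bidem (Some j))) + xgen (bidem None)"
    by (intro fcong_plus xgen_add fcong_refl bidem_closed)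
  ultimately have "1 \<approx> (xgen (bidem (Some i)) + xgen (bidem (Some j))) + xgen (bidem None)"
    using fcong_sym[OF xgen_one] fcong_trans by blast
  hence "1 \<approx> (egen i i + egen j j) + xgen (bidem None)"
    using Some[of i] Some[of j] by (simp add: bunit_def) (meson fcong_plus fcong_refl fcong_trans)
  hence "- (1 - ((egen i i + egen j j) + xgen (bidem None))) \<in> J" by (rule J_closed(3))
  hence None: "xgen (bidem None) \<approx> bunit None" by (simp add: bunit_def algebra_simps)
  show "b \<in> blocks \<Longrightarrow> xgen (bidem b) \<approx> bunit b"
    using Some None by (auto simp: blocks_def)
qed

lemma bunit_sum: "(\<Sum>b\<in>blocks. bunit b) = 1"
  by (simp add: blocks_def bunit_def i_neq_j)

lemma xgen_block:
  assumes "s \<in> blocks" "t \<in> blocks" "a \<in> car A"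
  shows "xgen (mul A (bidem s) (mul A a (bidem t))) \<approx> bunit s * xgen a * bunit t"
proof -
  have "xgen (mul A (bidem s) (mul A a (bidem t))) \<approx> xgen (bidem s) * xgen (mul A a (bidem t))"
    by (rule xgen_mul) (simp_all add: bidem_closed closed assms)
  moreover have "xgen (bidem s) * xgen (mul A a (bidem t)) \<approx> bunit s * (xgen a * bunit t)"
    using assms by (intro fcong_times xgen_bidem fcong_trans[OF xgen_mul fcong_times[OF fcong_refl xgen_bidem]])
      (simp_all add: bidem_closed)
  ultimately show ?thesis by (simp add: fcong_trans mult.assoc)
qed

definition in_block :: "'i option \<Rightarrow> 'i option \<Rightarrow> 'a \<Rightarrow> bool" where
  "in_block s t a \<longleftrightarrow> s \<in> blocks \<and> t \<in> blocks \<and> a \<in> car A \<and> mul A (bidem s) a = a \<and> mul A a (bidem t) = a"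

definition bproj :: "'i option \<Rightarrow> 'i option \<Rightarrow> 'a \<Rightarrow> 'a" where
  "bproj s t a = mul A (bidem s) (mul A a (bidem t))"

lemma in_block_bproj:
  assumes "s \<in> blocks" "t \<in> blocks" "a \<in> car A" shows "in_block s t (bproj s t a)"
proof -
  have c: "bidem s \<in> car A" "bidem t \<in> car A" "mul A a (bidem t) \<in> car A"
    using assms by (simp_all add: bidem_closed closed)
  have "mul A (bidem s) (bproj s t a) = mul A (mul A (bidem s) (bidem s)) (mul A a (bidem t))"
    and "mul A (bproj s t a) (bidem t) = mul A (bidem s) (mul A a (mul A (bidem t) (bidem t)))"
    unfolding bproj_def using c assms by (simp_all add: m_assoc)
  thus ?thesis using assms c by (simp add: in_block_def bidem_mul bproj_def closed)
qed

lemma xgen_in_block: "in_block s t a \<Longrightarrow> xgen a \<approx> bunit s * xgen a * bunit t"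
  using xgen_block[of s t a] by (simp add: in_block_def bproj_def)

text \<open>The block conditions of \<open>induced_bracket\<close> are those for the two blocks
  \<open>e\<^sub>j\<close> and \<open>1 - e\<^sub>j\<close>, a coarsening of ours.\<close>

lemma in_block_fusion_sides:
  assumes "in_block s t a"
  shows "mul A (if s = Some j then e j else sub A (one A) (e j)) a = a"
    and "mul A a (if t = Some j then e j else sub A (one A) (e j)) = a"
proof -
  define c where "c s' = (if s' = j then 0 else (1::'k))" for s'
  have compl: "sub A (one A) (e j) = lincomb A e c I"
  proof -
    have "sub A (one A) (e j) = add A (lincomb A e (\<lambda>_. 1) I) (lincomb A e (\<lambda>s. - bcoeff (Some j) s) I)"
      unfolding sub_def lincomb_ones using bidem_Some[of j] lincomb_neg[of I "bcoeff (Some j)"]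
      by (simp add: bidem_def)
    also have "\<dots> = lincomb A e c I"
      by (subst lincomb_add[symmetric]) (auto intro: lincomb_cong simp: bcoeff_def c_def)
    finally show ?thesis .
  qed
  have absorb: "b \<in> blocks \<Longrightarrow> b \<noteq> Some j \<Longrightarrow> \<forall>x. c x * bcoeff b x = bcoeff b x" for b
    by (auto simp: blocks_def bcoeff_def c_def i_neq_j i_neq_j[symmetric])
  have a: "s \<in> blocks" "t \<in> blocks" "a \<in> car A" "mul A (bidem s) a = a" "mul A a (bidem t) = a"
    using assms by (auto simp: in_block_def)
  show "mul A (if s = Some j then e j else sub A (one A) (e j)) a = a"
  proof (cases "s = Some j")
    case False
    have "mul A (lincomb A e c I) (mul A (bidem s) a) = mul A (mul A (lincomb A e c I) (bidem s)) a"
      using a by (intro m_assoc[symmetric] lincomb_closed bidem_closed) auto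
    thus ?thesis using False a absorb[of s] lincomb_absorb(1)[of c "bcoeff s"] by (simp add: compl bidem_def)
  qed (use a bidem_Some[of j] in simp)
  show "mul A a (if t = Some j then e j else sub A (one A) (e j)) = a"
  proof (cases "t = Some j")
    case False
    have "mul A (mul A a (bidem t)) (lincomb A e c I) = mul A a (mul A (bidem t) (lincomb A e c I))"
      using a by (intro m_assoc lincomb_closed bidem_closed) auto
    thus ?thesis using False a absorb[of t] lincomb_absorb(2)[of c "bcoeff t"] by (simp add: compl bidem_def)
  qed (use a bidem_Some[of j] in simp)
qed

text \<open>The generator \<open>e\<^sub>a a f\<^sub>a\<close> of \<open>A\<^sup>f\<close>: the left factor is \<open>e\<^sub>i\<^sub>j\<close> when \<open>a \<in> e\<^sub>j A\<close> and
  \<open>\<epsilon>\<close> otherwise, the right factor is \<open>e\<^sub>j\<^sub>i\<close> when \<open>a \<in> A e\<^sub>j\<close> and \<open>\<epsilon>\<close> otherwise.\<close>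

definition lfac :: "bool \<Rightarrow> ('a, 'i, 'k) fbar" where "lfac l = (if l then egen i j else eps)"
definition rfac :: "bool \<Rightarrow> ('a, 'i, 'k) fbar" where "rfac r = (if r then egen j i else eps)"

definition gen :: "'i option \<Rightarrow> 'i option \<Rightarrow> 'a \<Rightarrow> ('a, 'i, 'k) fbar set" where
  "gen s t a = Q (lfac (s = Some j) * xgen a * rfac (t = Some j))"

definition generators :: "('a, 'i, 'k) fbar set set" where
  "generators = {gen s t a | s t a. in_block s t a}"

lemmas factor_simps = matrix_simps lfac_def rfac_def bunit_def

lemma eps_lfac: "eps * lfac l \<approx> lfac l" and rfac_eps: "rfac r * eps \<approx> rfac r"
  by (cases l; cases r; simp add: factor_simps; blast intro: J_intros)+

lemma gen_closed: "gen s t a \<in> car F"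
proof -
  let ?l = "lfac (s = Some j)" and ?r = "rfac (t = Some j)"
  have "eps * ?l * xgen a * (?r * eps) \<approx> ?l * xgen a * ?r"
    by (intro fcong_times eps_lfac rfac_eps fcong_refl)
  from Q_eqI[OF this] have "gen s t a = Q (eps * (?l * xgen a * ?r) * eps)"
    by (simp add: gen_def mult.assoc)
  thus ?thesis by (simp add: fusion_carI)
qed

lemma generators_subset: "generators \<subseteq> car F"
  using gen_closed by (auto simp: generators_def)

lemma klinear_gen: "klinear A F (gen s t)"
  unfolding klinear_def
proof (intro conjI ballI allI)
  let ?l = "lfac (s = Some j)" and ?r = "rfac (t = Some j)"
  fix x y c assume x: "x \<in> car A" and y: "y \<in> car A"
  show "gen s t x \<in> car F" by (rule gen_closed)
  have "?l * xgen (add A x y) * ?r \<approx> ?l * (xgen x + xgen y) * ?r"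
    by (intro fcong_times fcong_refl xgen_add x y)
  thus "gen s t (add A x y) = add F (gen s t x) (gen s t y)"
    unfolding gen_def fusion_ops Ab_simps by (intro Q_eqI) (simp add: algebra_simps)
  have "?l * xgen (smul A c x) * ?r \<approx> ?l * (Poly_Mapping.single [] c * xgen x) * ?r"
    by (intro fcong_times fcong_refl xgen_smul x)
  thus "gen s t (smul A c x) = smul F c (gen s t x)"
    unfolding gen_def fusion_ops Ab_simps by (intro Q_eqI) (simp add: single_Nil_times_left_commute mult.assoc)
next
  have "lfac (s = Some j) * xgen (zer A) * rfac (t = Some j) \<in> J" by (intro J_closed xgen_zer)
  thus "gen s t (zer A) = zer F" unfolding gen_def fusion_ops Ab_simps by (intro Q_eqI) simp
qed

abbreviation "S \<equiv> gen_subalg F generators"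

lemma S_zer: "Q 0 \<in> S"
  using gen_subalg.smul[OF gen_subalg.one[of F generators], of 0] by (simp add: fusion_ops Ab_simps)

lemma S_J: "p \<in> J \<Longrightarrow> Q p \<in> S"
  using S_zer Q_eqI[of p 0] by simp

lemma S_fcong: "p' \<approx> p \<Longrightarrow> Q p \<in> S \<Longrightarrow> Q p' \<in> S"
  by (simp add: Q_eqI)

lemma S_plus: "Q p \<in> S \<Longrightarrow> Q q \<in> S \<Longrightarrow> Q (p + q) \<in> S"
  using gen_subalg.add[of "Q p" F generators "Q q"] by (simp add: fusion_ops Ab_simps)

lemma S_times: "Q p \<in> S \<Longrightarrow> Q q \<in> S \<Longrightarrow> Q (p * q) \<in> S"
  using gen_subalg.mul[of "Q p" F generators "Q q"] by (simp add: fusion_ops Ab_simps)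

lemma S_scalar: "Q p \<in> S \<Longrightarrow> Q (Poly_Mapping.single [] c * p) \<in> S"
  using gen_subalg.smul[of "Q p" F generators c] by (simp add: fusion_ops Ab_simps)

lemma S_sum: "finite X \<Longrightarrow> (\<And>u. u \<in> X \<Longrightarrow> Q (f u) \<in> S) \<Longrightarrow> Q (\<Sum>u\<in>X. f u) \<in> S"
  by (induction X rule: finite_induct) (simp_all add: S_zer S_plus)

lemma lfac_bunit_mismatch: "s \<in> blocks \<Longrightarrow> l \<noteq> (s = Some j) \<Longrightarrow> lfac l * bunit s \<in> J"
  unfolding blocks_def by (elim insertE emptyE; cases l; simp add: factor_simps; blast intro: J_intros)

lemma bunit_rfac_mismatch: "t \<in> blocks \<Longrightarrow> r \<noteq> (t = Some j) \<Longrightarrow> bunit t * rfac r \<in> J"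
  unfolding blocks_def by (elim insertE emptyE; cases r; simp add: factor_simps; blast intro: J_intros)

lemma bunit_decomp: "L * M * R = (\<Sum>s\<in>blocks. \<Sum>t\<in>blocks. L * bunit s * M * bunit t * R)"
proof -
  have "L * M * R = L * (\<Sum>s\<in>blocks. bunit s) * M * (\<Sum>t\<in>blocks. bunit t) * R"
    by (simp add: bunit_sum)
  also have "\<dots> = (\<Sum>s\<in>blocks. \<Sum>t\<in>blocks. L * bunit s * M * bunit t * R)"
    by (simp add: sum_distrib_left sum_distrib_right mult.assoc) (rule sum.swap)
  finally show ?thesis .
qed

lemma corner_xgen_block:
  assumes s: "s \<in> blocks" and t: "t \<in> blocks" and a: "a \<in> car A"
  shows "Q (lfac l * bunit s * xgen a * bunit t * rfac r) \<in> S"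
proof (cases "l = (s = Some j) \<and> r = (t = Some j)")
  case True
  have "lfac l * xgen (bproj s t a) * rfac r \<approx> lfac l * (bunit s * xgen a * bunit t) * rfac r"
    unfolding bproj_def by (intro fcong_times fcong_refl xgen_block s t a)
  moreover have "gen s t (bproj s t a) \<in> S"
    using in_block_bproj[OF s t a] by (intro gen_subalg.gen) (auto simp: generators_def)
  ultimately show ?thesis using True by (auto simp: gen_def mult.assoc intro: S_fcong[OF fcong_sym])
next
  case False
  then consider "l \<noteq> (s = Some j)" | "r \<noteq> (t = Some j)" by blast
  thus ?thesis
  proof cases
    case 1
    show ?thesis using J_closed(5)[OF lfac_bunit_mismatch[OF s 1], of "xgen a * bunit t * rfac r"]
      by (simp add: mult.assoc S_J)
  next
    case 2
    show ?thesis using J_closed(4)[OF bunit_rfac_mismatch[OF t 2], of "lfac l * bunit s * xgen a"]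
      by (simp add: mult.assoc S_J)
  qed
qed

lemma corner_xgen: "Q (lfac l * xgen a * rfac r) \<in> S"
proof (cases "a \<in> car A")
  case False
  hence "lfac l * xgen a * rfac r \<in> J" by (intro J_closed xgen_outside)
  thus ?thesis by (rule S_J)
next
  case True
  have "Q (\<Sum>s\<in>blocks. \<Sum>t\<in>blocks. lfac l * bunit s * xgen a * bunit t * rfac r) \<in> S"
    by (intro S_sum finite_blocks corner_xgen_block True)
  thus ?thesis by (simp only: bunit_decomp[symmetric])
qed

lemma egen_ii_in_S: "Q (egen i i) \<in> S"
proof -
  have "in_block (Some i) (Some i) (bidem (Some i))"
    by (simp add: in_block_def bidem_closed bidem_mul blocks_def)
  hence "gen (Some i) (Some i) (bidem (Some i)) \<in> S"
    unfolding generators_def by (intro gen_subalg.gen) blast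
  moreover have "egen i i \<approx> eps * xgen (bidem (Some i)) * eps"
  proof (rule fcong_sym, rule fcong_trans)
    show "eps * xgen (bidem (Some i)) * eps \<approx> eps * bunit (Some i) * eps"
      by (intro fcong_times fcong_refl xgen_bidem) (simp add: blocks_def)
    show "eps * bunit (Some i) * eps \<approx> egen i i"
      by (simp add: factor_simps) (blast intro: J_intros)
  qed
  ultimately show ?thesis by (simp add: S_fcong gen_def lfac_def rfac_def i_neq_j)
qed

lemma lfac_egen_rfac:
  "p \<in> {i, j} \<Longrightarrow> q \<in> {i, j} \<Longrightarrow>
    lfac l * egen p q * rfac r \<approx> (if l = (p = j) \<and> r = (q = j) then egen i i else 0)"
  by (auto; cases l; cases r; simp add: factor_simps; blast intro: J_intros)

lemma corner_egen: "Q (lfac l * egen p q * rfac r) \<in> S"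
proof (cases "p \<in> {i, j} \<and> q \<in> {i, j}")
  case False
  hence "lfac l * egen p q * rfac r \<in> J" by (intro J_closed egen_outside) blast
  thus ?thesis by (rule S_J)
next
  case True
  hence "lfac l * egen p q * rfac r \<approx> (if l = (p = j) \<and> r = (q = j) then egen i i else 0)"
    by (intro lfac_egen_rfac) auto
  moreover have "Q (if l = (p = j) \<and> r = (q = j) then egen i i else 0) \<in> S"
    using egen_ii_in_S S_zer by simp
  ultimately show ?thesis by (rule S_fcong)
qed

lemma corner_fgen: "Q (lfac l * fgen g * rfac r) \<in> S"
  using corner_xgen corner_egen by (cases g) (auto simp: xgen_def egen_def)

lemma lfac_rfac: "lfac l * rfac r \<approx> (if l then (if r then egen i i else 0) else (if r then 0 else eps))"
  by (cases l; cases r; simp add: factor_simps; blast intro: J_intros)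

lemma unity_split: "rfac False * lfac False + rfac True * lfac True \<approx> 1"
  by (simp add: factor_simps) (blast intro: J_intros)

lemma corner_monomial: "Q (lfac l * Poly_Mapping.single u 1 * rfac r) \<in> S"
proof (induction u arbitrary: l r)
  case Nil
  have "Q eps \<in> S" using gen_subalg.one[of F generators] by (simp add: fusion_ops)
  hence "Q (if l then (if r then egen i i else 0) else (if r then 0 else eps)) \<in> S"
    using egen_ii_in_S S_zer by simp
  hence "Q (lfac l * rfac r) \<in> S" by (rule S_fcong[OF lfac_rfac])
  thus ?case by (simp add: Nil_eq_zero)
next
  case (Cons g w)
  let ?w = "Poly_Mapping.single w (1::'k)"
  have split: "(lfac l * fgen g) * (rfac False * lfac False + rfac True * lfac True) * (?w * rfac r) \<approx>
      (lfac l * fgen g) * 1 * (?w * rfac r)"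
    by (intro fcong_times fcong_refl unity_split)
  have "lfac l * (fgen g * ?w) * rfac r \<approx>
      (lfac l * fgen g * rfac False) * (lfac False * ?w * rfac r) + (lfac l * fgen g * rfac True) * (lfac True * ?w * rfac r)"
    using fcong_sym[OF split] by (simp add: algebra_simps)
  moreover have "Q ((lfac l * fgen g * rfac False) * (lfac False * ?w * rfac r) +
      (lfac l * fgen g * rfac True) * (lfac True * ?w * rfac r)) \<in> S"
    by (intro S_plus S_times corner_fgen Cons.IH)
  ultimately have "Q (lfac l * (fgen g * ?w) * rfac r) \<in> S" by (rule S_fcong)
  moreover have "fgen g * ?w = Poly_Mapping.single (g # w) 1"
    by (simp add: fgen_def mult_single plus_list_def)
  ultimately show ?case by simp
qed

lemma corner_in_S: "Q (lfac l * p * rfac r) \<in> S"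
proof -
  have monomial: "Poly_Mapping.single [] c * Poly_Mapping.single u (1::'k) = Poly_Mapping.single u c" for u c
    by (simp add: mult_single plus_list_def)
  have "lfac l * p * rfac r = (\<Sum>u\<in>Poly_Mapping.keys p.
      lfac l * (Poly_Mapping.single [] (Poly_Mapping.lookup p u) * Poly_Mapping.single u 1) * rfac r)"
    by (subst poly_mapping_monomial_sum[of p]) (simp add: monomial sum_distrib_left sum_distrib_right)
  also have "\<dots> = (\<Sum>u\<in>Poly_Mapping.keys p.
      Poly_Mapping.single [] (Poly_Mapping.lookup p u) * (lfac l * Poly_Mapping.single u 1 * rfac r))"
    by (rule sum.cong[OF HOL.refl]) (simp only: mult.assoc single_Nil_times_left_commute)
  also have "Q \<dots> \<in> S"
    by (intro S_sum finite_keys S_scalar corner_monomial)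
  finally show ?thesis .
qed

lemma fusion_car_subset_gen_subalg: "car F \<subseteq> S"
  using corner_in_S[of False _ False] by (auto simp: fusion_car lfac_def rfac_def)

end

section \<open>Exchanging the two idempotents\<close>

locale fusion_bracket = fusion_presentation A e I i j + B_bracket A e I brA
  for A :: "('k::field, 'a) kalg" and e :: "'i \<Rightarrow> 'a" and I :: "'i list" and brA i j +
  fixes br :: "('a, 'i, 'k) fbar set \<Rightarrow> ('a, 'i, 'k) fbar set \<Rightarrow> (('a, 'i, 'k) fbar set \<times> ('a, 'i, 'k) fbar set) list"
  assumes induced: "induced_bracket A e I i j brA br"
begin

lemma dbl_bracket_alg_fusion: "dbl_bracket_alg F (fus_idem A e i j) (fus_index I j) br"
  using induced is_kalg_fusion unfolding induced_bracket_def Let_def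
  by (simp add: dbl_bracket_alg_def dbl_bracket_alg_axioms_def kalgebra_def)

lemma br_gen:
  assumes a: "in_block s t a" and b: "in_block s' t' b"
  shows "tens_eq F (br (gen s t a) (gen s' t' b)) (tmap2 (gen s' t) (gen s t') (brA a b))"
proof -
  have L: "(if l then munit A e i j i j else feps A e i j) = Q (lfac l)"
    and R: "(if r then munit A e i j j i else feps A e i j) = Q (rfac r)"
    and G: "mul Ab (Q (lfac l)) (mul Ab (iota A e i j x) (Q (rfac r))) = Q (lfac l * xgen x * rfac r)" for l r x
    by (simp_all add: lfac_def rfac_def munit_eq feps_eq iota_eq Ab_simps mult.assoc)
  have "tens_eq F (br (Q (lfac la * xgen a * rfac ra)) (Q (lfac lb * xgen b * rfac rb)))
      (tmap2 (\<lambda>p. Q (lfac lb * xgen p * rfac ra)) (\<lambda>q. Q (lfac la * xgen q * rfac rb)) (brA a b))"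
    if "mul A (if la then e j else sub A (one A) (e j)) a = a" "mul A a (if ra then e j else sub A (one A) (e j)) = a"
      "mul A (if lb then e j else sub A (one A) (e j)) b = b" "mul A b (if rb then e j else sub A (one A) (e j)) = b"
    for la ra lb rb
    using induced that a b unfolding induced_bracket_def Let_def L R G tmap2_def in_block_def by blast
  from this[OF in_block_fusion_sides[OF a] in_block_fusion_sides[OF b]] show ?thesis
    by (simp add: gen_def[abs_def])
qed

lemma brA_block:
  assumes "in_block s t a" "in_block s' t' b"
  shows "tens_eq A (brA a b) (tmap2 (bproj s' t) (bproj s t') (brA a b))"
  using assms unfolding in_block_def bproj_def[abs_def]
  by (intro br_block_projection bidem_in_kspan) auto

end

locale fusion_swap = f1: fusion_bracket A e I brA i j br1 + f2: fusion_bracket A e I brA j i br2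
  for A :: "('k::field, 'a) kalg" and e :: "'i \<Rightarrow> 'a" and I brA i j br1 br2
begin

no_notation f2.fcong (infix "\<approx>" 50)

abbreviation "F1 \<equiv> fusion A e i j"
abbreviation "F2 \<equiv> fusion A e j i"
abbreviation "Q \<equiv> f1.Q"
abbreviation "Ab \<equiv> f1.Ab"

lemma fideal_swap: "fideal (fus_rels A e j i) = fideal (fus_rels A e i j)"
  by (simp only: fus_rels_commute[of A e j i])

lemmas swap_simps = fideal_swap Abar_commute[of A e j i]

lemma f2_blocks: "f2.blocks = f1.blocks"
  by (auto simp: f1.blocks_def f2.blocks_def)

lemma f2_bidem: "f2.bidem = f1.bidem"
  by (auto simp: fun_eq_iff f1.bidem_def f2.bidem_def f1.bcoeff_def f2.bcoeff_def intro!: f1.lincomb_cong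
      split: option.split)

lemma f2_in_block: "f2.in_block = f1.in_block"
  by (simp add: fun_eq_iff f1.in_block_def f2.in_block_def f2_blocks f2_bidem)

definition swapU :: "('a, 'i, 'k) fbar" where
  "swapU = egen i j + egen j i + (1 - egen i i - egen j j)"

definition phi :: "('a, 'i, 'k) fbar set \<Rightarrow> ('a, 'i, 'k) fbar set" where
  "phi x = mul Ab (Q swapU) (mul Ab x (Q swapU))"

lemmas conj_simps = f1.factor_simps f2.eps_def f2.lfac_def f2.rfac_def swapU_def

lemma swapU_sq: "swapU * swapU \<approx> 1"
  by (simp add: conj_simps) (blast intro: f1.J_intros)

lemma swapU_eps: "swapU * f1.eps \<approx> f2.eps * swapU"
  by (simp add: conj_simps) (blast intro: f1.J_intros)

lemma eps_swapU: "f1.eps * swapU \<approx> swapU * f2.eps"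
  by (simp add: conj_simps) (blast intro: f1.J_intros)

lemma swapU_lfac_bunit:
  "s \<in> f1.blocks \<Longrightarrow> swapU * f1.lfac (s = Some j) * f1.bunit s \<approx> f2.lfac (s = Some i) * f1.bunit s"
  unfolding f1.blocks_def by (elim insertE emptyE; simp add: conj_simps; blast intro: f1.J_intros)

lemma bunit_rfac_swapU:
  "t \<in> f1.blocks \<Longrightarrow> f1.bunit t * f1.rfac (t = Some j) * swapU \<approx> f1.bunit t * f2.rfac (t = Some i)"
  unfolding f1.blocks_def by (elim insertE emptyE; simp add: conj_simps; blast intro: f1.J_intros)

lemma phi_Q: "phi (Q p) = Q (swapU * p * swapU)"
  by (simp add: phi_def f1.Ab_mul mult.assoc)

lemma phi_phi: "phi (phi (Q p)) = Q p"
proof -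
  have "(swapU * swapU) * p * (swapU * swapU) \<approx> 1 * p * 1"
    by (intro f1.fcong_times swapU_sq f1.fcong_refl)
  thus ?thesis by (simp add: phi_Q f1.Q_eqI mult.assoc)
qed

lemma phi_fusion_car: "x \<in> car F1 \<Longrightarrow> phi x \<in> car F2"
proof -
  assume "x \<in> car F1"
  then obtain p where x: "x = Q (f1.eps * p * f1.eps)" by (auto simp: f1.fusion_car)
  have "(swapU * f1.eps) * p * (f1.eps * swapU) \<approx> (f2.eps * swapU) * p * (swapU * f2.eps)"
    by (intro f1.fcong_times swapU_eps eps_swapU f1.fcong_refl)
  hence "phi x = Q (f2.eps * (swapU * p * swapU) * f2.eps)"
    by (simp add: x phi_Q f1.Q_eqI mult.assoc)
  thus ?thesis using f2.fusion_carI by (simp add: swap_simps)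
qed

lemma phi_fusion_car': "x \<in> car F2 \<Longrightarrow> phi x \<in> car F1"
proof -
  assume "x \<in> car F2"
  then obtain p where x: "x = Q (f2.eps * p * f2.eps)" by (auto simp: f2.fusion_car swap_simps)
  have "(swapU * f2.eps) * p * (f2.eps * swapU) \<approx> (f1.eps * swapU) * p * (swapU * f1.eps)"
    by (intro f1.fcong_times f1.fcong_sym[OF swapU_eps] f1.fcong_sym[OF eps_swapU] f1.fcong_refl)
  hence "phi x = Q (f1.eps * (swapU * p * swapU) * f1.eps)"
    by (simp add: x phi_Q f1.Q_eqI mult.assoc)
  thus ?thesis by (simp add: f1.fusion_carI)
qed

lemma phi_alg_iso: "alg_iso F1 F2 phi"
  unfolding alg_iso_def
proof (intro conjI ballI allI)
  show "bij_betw phi (car F1) (car F2)"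
  proof (rule bij_betw_byWitness[where f' = phi])
    show "\<forall>x\<in>car F1. phi (phi x) = x" using f1.fusion_car_subset phi_phi by blast
    show "\<forall>x\<in>car F2. phi (phi x) = x" using f2.fusion_car_subset phi_phi by (auto simp: swap_simps)
  qed (use phi_fusion_car phi_fusion_car' in blast)+
  have "(swapU * f1.eps) * swapU \<approx> (f2.eps * swapU) * swapU" "f2.eps * (swapU * swapU) \<approx> f2.eps * 1"
    by (intro f1.fcong_times swapU_eps swapU_sq f1.fcong_refl)+
  thus "phi (one F1) = one F2"
    by (simp add: f1.fusion_ops f2.fusion_ops swap_simps phi_Q mult.assoc f1.Q_eqI f1.fcong_trans)
  fix x y c assume "x \<in> car F1" "y \<in> car F1"
  then obtain p q where x: "x = Q p" and y: "y = Q q" using f1.fusion_car_subset by blast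
  show "phi (add F1 x y) = add F2 (phi x) (phi y)"
    by (simp add: x y f1.fusion_ops f2.fusion_ops swap_simps f1.Ab_simps phi_Q algebra_simps)
  have "swapU * p * 1 * (q * swapU) \<approx> swapU * p * (swapU * swapU) * (q * swapU)"
    by (intro f1.fcong_times f1.fcong_refl f1.fcong_sym[OF swapU_sq])
  thus "phi (mul F1 x y) = mul F2 (phi x) (phi y)"
    by (simp add: x y f1.fusion_ops f2.fusion_ops swap_simps f1.Ab_simps phi_Q f1.Q_eqI mult.assoc)
  show "phi (smul F1 c x) = smul F2 c (phi x)"
    by (simp add: x f1.fusion_ops f2.fusion_ops swap_simps f1.Ab_simps phi_Q mult.assoc
        single_Nil_times_left_commute)
qed

lemma phi_fpi: "phi (fpi A e i j a) = fpi A e j i a"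
proof -
  have "(swapU * (f1.eps + egen i j)) * xgen a * ((f1.eps + egen j i) * swapU) \<approx>
      (f2.eps + egen j i) * xgen a * (f2.eps + egen i j)"
    by (intro f1.fcong_times f1.fcong_refl) (simp_all add: conj_simps; blast intro: f1.J_intros)+
  thus ?thesis by (simp add: f1.fpi_eq f2.fpi_eq swap_simps phi_Q f1.Q_eqI algebra_simps)
qed

lemma phi_gen: assumes a: "f1.in_block s t a" shows "phi (f1.gen s t a) = f2.gen s t a"
proof -
  let ?l1 = "f1.lfac (s = Some j)" and ?r1 = "f1.rfac (t = Some j)"
  let ?l2 = "f2.lfac (s = Some i)" and ?r2 = "f2.rfac (t = Some i)"
  have st: "s \<in> f1.blocks" "t \<in> f1.blocks" using a by (auto simp: f1.in_block_def)
  have xa: "xgen a \<approx> f1.bunit s * xgen a * f1.bunit t" by (rule f1.xgen_in_block[OF a])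
  have "swapU * ?l1 * xgen a * (?r1 * swapU) \<approx> swapU * ?l1 * (f1.bunit s * xgen a * f1.bunit t) * (?r1 * swapU)"
    by (intro f1.fcong_times f1.fcong_refl xa)
  moreover have "(swapU * ?l1 * f1.bunit s) * xgen a * (f1.bunit t * ?r1 * swapU) \<approx>
      (?l2 * f1.bunit s) * xgen a * (f1.bunit t * ?r2)"
    by (intro f1.fcong_times f1.fcong_refl swapU_lfac_bunit bunit_rfac_swapU st)
  moreover have "?l2 * (f1.bunit s * xgen a * f1.bunit t) * ?r2 \<approx> ?l2 * xgen a * ?r2"
    by (intro f1.fcong_times f1.fcong_refl f1.fcong_sym[OF xa])
  ultimately have "swapU * (?l1 * xgen a * ?r1) * swapU \<approx> ?l2 * xgen a * ?r2"
    by (simp add: mult.assoc) (meson f1.fcong_trans)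
  thus ?thesis by (simp add: f1.gen_def f2.gen_def swap_simps phi_Q f1.Q_eqI)
qed

lemma phi_alg_hom: "alg_hom F1 F2 phi"
  by (rule alg_iso_imp_alg_hom[OF f1.is_kalg_fusion f2.is_kalg_fusion phi_alg_iso])

lemma tens_eq_tmap_phi: "tens_eq F1 t u \<Longrightarrow> tens_eq F2 (tmap phi t) (tmap phi u)"
  using phi_alg_hom unfolding tensor_ops_eq_tmap2 alg_hom_def by (blast intro: tens_eq_tmap2)

lemma phi_intertwines_gen:
  assumes a: "f1.in_block s t a" and b: "f1.in_block s' t' b"
  shows "tens_eq F2 (br2 (phi (f1.gen s t a)) (phi (f1.gen s' t' b))) (tmap phi (br1 (f1.gen s t a) (f1.gen s' t' b)))"
proof -
  let ?proj = "tmap2 (f1.bproj s' t) (f1.bproj s t') (brA a b)"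
  have a2: "f2.in_block s t a" and b2: "f2.in_block s' t' b" using a b by (simp_all add: f2_in_block)
  have ab: "a \<in> car A" "b \<in> car A" and st: "s' \<in> f1.blocks" "t \<in> f1.blocks" "s \<in> f1.blocks" "t' \<in> f1.blocks"
    using a b by (auto simp: f1.in_block_def)
  have "br2 (phi (f1.gen s t a)) (phi (f1.gen s' t' b)) = br2 (f2.gen s t a) (f2.gen s' t' b)"
    by (simp add: phi_gen a b)
  also have "tens_eq F2 \<dots> (tmap2 (f2.gen s' t) (f2.gen s t') (brA a b))"
    by (rule f2.br_gen[OF a2 b2])
  also have "tens_eq F2 \<dots> (tmap2 (f2.gen s' t) (f2.gen s t') ?proj)"
    by (rule tens_eq_tmap2[OF f1.brA_block[OF a b] f2.klinear_gen f2.klinear_gen])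
  also have "\<dots> = tmap phi (tmap2 (f1.gen s' t) (f1.gen s t') ?proj)"
    unfolding tensor_ops_eq_tmap2 tmap2_tmap2
    by (rule tmap2_cong) (use f1.br_closed[OF ab] st in \<open>auto simp: phi_gen f1.in_block_bproj\<close>)
  also have "tens_eq F2 \<dots> (tmap phi (tmap2 (f1.gen s' t) (f1.gen s t') (brA a b)))"
    by (rule tens_eq_tmap_phi, rule tens_eq.sym,
        rule tens_eq_tmap2[OF f1.brA_block[OF a b] f1.klinear_gen f1.klinear_gen])
  also have "tens_eq F2 \<dots> (tmap phi (br1 (f1.gen s t a) (f1.gen s' t' b)))"
    by (rule tens_eq_tmap_phi, rule tens_eq.sym, rule f1.br_gen[OF a b])
  finally show ?thesis .
qed

lemma phi_bracket:
  assumes x: "x \<in> car F1" and y: "y \<in> car F1"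
  shows "tens_eq F2 (br2 (phi x) (phi y)) (tmap phi (br1 x y))"
proof -
  interpret bracket_hom F1 "fus_idem A e i j" "fus_index I j" br1 F2 "fus_idem A e j i" "fus_index I i" br2 phi
    by (intro bracket_hom.intro f1.dbl_bracket_alg_fusion f2.dbl_bracket_alg_fusion
        bracket_hom_axioms.intro phi_alg_hom)
  have "intertwines x y"
  proof (rule intertwines_gen_subalg[OF f1.generators_subset])
    show "x \<in> f1.S" "y \<in> f1.S" using x y f1.fusion_car_subset_gen_subalg by auto
    fix g h assume "g \<in> f1.generators" "h \<in> f1.generators"
    thus "intertwines g h" unfolding f1.generators_def intertwines_def using phi_intertwines_gen by blast
  qed
  thus ?thesis by (simp add: intertwines_def)
qed

end

theorem mainTheorem6:
  fixes A :: "('k::field_char_0, 'a) kalg"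
    and e :: "'i \<Rightarrow> 'a" and I :: "'i list"
    and brA :: "'a \<Rightarrow> 'a \<Rightarrow> ('a \<times> 'a) list"
    and i1 i2 :: 'i
    and br1 br2 :: "('a, 'i, 'k) fbar set \<Rightarrow> ('a, 'i, 'k) fbar set \<Rightarrow>
                    (('a, 'i, 'k) fbar set \<times> ('a, 'i, 'k) fbar set) list"
  assumes "B_algebra A e I" and "fin_gen A" and "dbl_bracket A e I brA"
    and "i1 \<in> set I" and "i2 \<in> set I" and "i1 \<noteq> i2"
    and "induced_bracket A e I i1 i2 brA br1"
    and "induced_bracket A e I i2 i1 brA br2"
  shows "\<exists>\<phi>. alg_iso (fusion A e i1 i2) (fusion A e i2 i1) \<phi> \<and>
           (\<forall>a\<in>car A. \<phi> (fpi A e i1 i2 a) = fpi A e i2 i1 a) \<and>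
           (\<forall>x\<in>car (fusion A e i1 i2). \<forall>y\<in>car (fusion A e i1 i2).
              tens_eq (fusion A e i2 i1) (br2 (\<phi> x) (\<phi> y)) (tmap \<phi> (br1 x y)))"
proof -
  interpret fusion_swap A e I brA i1 i2 br1 br2
    by unfold_locales (use assms in \<open>auto simp: B_algebra_def\<close>)
  show ?thesis using phi_alg_iso phi_fpi phi_bracket by blast
qed

end
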